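(* Let $G$ be a cubical $\omega$-category with connections and $x\in G_n$. Then $x$ is thin if and only if $x$ is an (iterated) composite, under the compositions $\circ_k$ of $G_n$, of elements of the forms $\varepsilon_iy$ and $\Gamma^\alpha_jz$ for various $i,j,\alpha,y,z$.
   Context: A cubical $\omega$-category with connections $G$ consists of sets $G_n$ ($n\ge0$), face maps $\partial^\alpha_i:G_n\to G_{n-1}$, degeneracies $\varepsilon_i:G_{n-1}\to G_n$, connections $\Gamma^\alpha_i:G_n\to G_{n+1}$ ($1\le i\le n$, $\alpha=\pm$) and partial compositions $\circ_j$ on $G_n$ ($1\le j\le n$, $a\circ_jb$ defined iff $\partial^+_ja=\partial^-_jb$) satisfying: $\partial^\alpha_i\partial^\beta_j=\partial^\beta_{j-1}\partial^\alpha_i$ ($i<j$), $\varepsilon_i\varepsilon_j=\varepsilon_{j+1}\varepsilon_i$ ($i\le j$), $\partial^\alpha_i\varepsilon_j=\varepsilon_{j-1}\partial^\alpha_i$ ($i<j$), $\varepsilon_j\partial^\alpha_{i-1}$ ($i>j$), $\mathrm{id}$ ($i=j$); $\Gamma^\alpha_i\Gamma^\beta_j=\Gamma^\beta_{j+1}\Gamma^\alpha_i$ ($i<j$), $\Gamma^\alpha_i\Gamma^\alpha_i=\Gamma^\alpha_{i+1}\Gamma^\alpha_i$, $\Gamma^\alpha_i\varepsilon_j=\varepsilon_{j+1}\Gamma^\alpha_i$ ($i<j$), $\varepsilon_j\Gamma^\alpha_{i-1}$ ($i>j$), $\Gamma^\alpha_j\varepsilon_j=\varepsilon_{j+1}\varepsilon_j$,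 $\partial^\alpha_i\Gamma^\beta_j=\Gamma^\beta_{j-1}\partial^\alpha_i$ ($i<j$), $\Gamma^\beta_j\partial^\alpha_{i-1}$ ($i>j+1$), $\partial^\alpha_j\Gamma^\alpha_j=\partial^\alpha_{j+1}\Gamma^\alpha_j=\mathrm{id}$, $\partial^\alpha_j\Gamma^{-\alpha}_j=\partial^\alpha_{j+1}\Gamma^{-\alpha}_j=\varepsilon_j\partial^\alpha_j$; $\partial^-_j(a\circ_jb)=\partial^-_ja$, $\partial^+_j(a\circ_jb)=\partial^+_jb$, $\partial^\alpha_i(a\circ_jb)=\partial^\alpha_ia\circ_{j-1}\partial^\alpha_ib$ ($i<j$), $\partial^\alpha_ia\circ_j\partial^\alpha_ib$ ($i>j$); interchange for $i\ne j$; $\varepsilon_i(a\circ_jb)=\varepsilon_ia\circ_{j+1}\varepsilon_ib$ ($i\le j$), $\varepsilon_ia\circ_j\varepsilon_ib$ ($i>j$); $\Gamma^\alpha_i(a\circ_jb)=\Gamma^\alpha_ia\circ_{j+1}\Gamma^\alpha_ib$ ($i<j$), $\Gamma^\alpha_ia\circ_j\Gamma^\alpha_ib$ ($i>j$); $\Gamma^+_j(a\circ_jb)=(\Gamma^+_ja\circ_j\varepsilon_ja)\circ_{j+1}(\varepsilon_{j+1}a\circ_j\Gamma^+_jb)$, $\Gamma^-_j(a\circ_jb)=(\Gamma^-_ja\circ_j\varepsilon_{j+1}b)\circ_{j+1}(\varepsilon_jb\circ_j\Gamma^-_jb)$; each $\circ_j$ is a category structure with identities $\varepsilon_jy$; $\Gamma^+_ix\circ_i\Gamma^-_ix=\varepsilon_{i+1}x$,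 $\Gamma^+_ix\circ_{i+1}\Gamma^-_ix=\varepsilon_ix$. Folding operations on $G_n$: $\psi_ix=\Gamma^+_i\partial^-_{i+1}x\circ_{i+1}x\circ_{i+1}\Gamma^-_i\partial^+_{i+1}x$ ($1\le i\le n-1$), $\Psi_r=\psi_{r-1}\cdots\psi_1$, $\Phi_n=\Psi_1\Psi_2\cdots\Psi_n$. The $\omega$-category $\gamma G$: each $\Phi_n(G_n)$ is a (globular, strict) $\omega$-category with $d^\alpha_px=\varepsilon_1^{n-p}(\partial^\alpha_1)^{n-p}x$, $x\#_py=x\circ_{n-p}y$ for $0\le p<n$, and $d^\alpha_px=x$ with only composites $x\#_px=x$ for $p\ge n$; $\gamma G$ is the colimit of $\Phi_0(G_0)\xrightarrow{\varepsilon_1}\Phi_1(G_1)\xrightarrow{\varepsilon_1}\cdots$. The dimension of an element $u$ of an $\omega$-category is the least $p$ with $d^-_pu=d^+_pu=u$. Thin elements: identifying $x\in G_n$ with the homomorphism $M(I^n)\to\gamma G$ it determines (whose value on the top cell $I^n$ is $\Phi_nx$), $x$ is called thin if $\dim x(I^n)<n$, i.e. if the element $\Phi_nx\in\gamma G$ has dimension less than $n$ in the $\omega$-category $\gamma G$. *)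

theory Defs
  imports Main
begin

datatype sgn = Neg | Pos

fun opp :: "sgn \<Rightarrow> sgn" where
  "opp Neg = Pos" | "opp Pos = Neg"

text \<open>Conventions (all operations are indexed by the dimension n of their argument):
  cell G n  = the set G_n;
  fc G n i a : G_n \<rightarrow> G_(n-1) is the face map \<partial>^a_i  (1 \<le> i \<le> n);
  dg G n i   : G_n \<rightarrow> G_(n+1) is the degeneracy \<epsilon>_i  (1 \<le> i \<le> n+1);
  cn G n i a : G_n \<rightarrow> G_(n+1) is the connection \<Gamma>^a_i  (1 \<le> i \<le> n);
  cp G n j x y is x \<circ>_j y in G_n  (1 \<le> j \<le> n), defined iff \<partial>^+_j x = \<partial>^-_j y.\<close>

record 'a cubcat =
  cell :: "nat \<Rightarrow> 'a set"
  fc :: "nat \<Rightarrow> nat \<Rightarrow> sgn \<Rightarrow> 'a \<Rightarrow> 'a"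
  dg :: "nat \<Rightarrow> nat \<Rightarrow> 'a \<Rightarrow> 'a"
  cn :: "nat \<Rightarrow> nat \<Rightarrow> sgn \<Rightarrow> 'a \<Rightarrow> 'a"
  cp :: "nat \<Rightarrow> nat \<Rightarrow> 'a \<Rightarrow> 'a \<Rightarrow> 'a"

definition composable :: "'a cubcat \<Rightarrow> nat \<Rightarrow> nat \<Rightarrow> 'a \<Rightarrow> 'a \<Rightarrow> bool" where
  "composable G n j a b \<longleftrightarrow> a \<in> cell G n \<and> b \<in> cell G n \<and> 1 \<le> j \<and> j \<le> n
     \<and> fc G n j Pos a = fc G n j Neg b"

locale cubical_omega_cat_conn =
  fixes G :: "'a cubcat"
  assumes face_closed: "\<lbrakk>x \<in> cell G n; 1 \<le> i; i \<le> n\<rbrakk> \<Longrightarrow> fc G n i \<alpha> x \<in> cell G (n - 1)"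
    and deg_closed: "\<lbrakk>x \<in> cell G n; 1 \<le> i; i \<le> Suc n\<rbrakk> \<Longrightarrow> dg G n i x \<in> cell G (Suc n)"
    and conn_closed: "\<lbrakk>x \<in> cell G n; 1 \<le> i; i \<le> n\<rbrakk> \<Longrightarrow> cn G n i \<alpha> x \<in> cell G (Suc n)"
    and comp_closed: "composable G n j a b \<Longrightarrow> cp G n j a b \<in> cell G n"
    and face_face: "\<lbrakk>x \<in> cell G n; 1 \<le> i; i < j; j \<le> n\<rbrakk> \<Longrightarrow>
        fc G (n - 1) i \<alpha> (fc G n j \<beta> x) = fc G (n - 1) (j - 1) \<beta> (fc G n i \<alpha> x)"
    and deg_deg: "\<lbrakk>x \<in> cell G n; 1 \<le> i; i \<le> j; j \<le> Suc n\<rbrakk> \<Longrightarrow>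
        dg G (Suc n) i (dg G n j x) = dg G (Suc n) (Suc j) (dg G n i x)"
    and face_deg_lt: "\<lbrakk>x \<in> cell G n; 1 \<le> i; i < j; j \<le> Suc n\<rbrakk> \<Longrightarrow>
        fc G (Suc n) i \<alpha> (dg G n j x) = dg G (n - 1) (j - 1) (fc G n i \<alpha> x)"
    and face_deg_gt: "\<lbrakk>x \<in> cell G n; 1 \<le> j; j < i; i \<le> Suc n\<rbrakk> \<Longrightarrow>
        fc G (Suc n) i \<alpha> (dg G n j x) = dg G (n - 1) j (fc G n (i - 1) \<alpha> x)"
    and face_deg_eq: "\<lbrakk>x \<in> cell G n; 1 \<le> j; j \<le> Suc n\<rbrakk> \<Longrightarrow>
        fc G (Suc n) j \<alpha> (dg G n j x) = x"
    and conn_conn: "\<lbrakk>x \<in> cell G n; 1 \<le> i; i < j; j \<le> n\<rbrakk> \<Longrightarrow>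
        cn G (Suc n) i \<alpha> (cn G n j \<beta> x) = cn G (Suc n) (Suc j) \<beta> (cn G n i \<alpha> x)"
    and conn_conn_eq: "\<lbrakk>x \<in> cell G n; 1 \<le> i; i \<le> n\<rbrakk> \<Longrightarrow>
        cn G (Suc n) i \<alpha> (cn G n i \<alpha> x) = cn G (Suc n) (Suc i) \<alpha> (cn G n i \<alpha> x)"
    and conn_deg_lt: "\<lbrakk>x \<in> cell G n; 1 \<le> i; i < j; j \<le> Suc n\<rbrakk> \<Longrightarrow>
        cn G (Suc n) i \<alpha> (dg G n j x) = dg G (Suc n) (Suc j) (cn G n i \<alpha> x)"
    and conn_deg_gt: "\<lbrakk>x \<in> cell G n; 1 \<le> j; j < i; i \<le> Suc n\<rbrakk> \<Longrightarrow>
        cn G (Suc n) i \<alpha> (dg G n j x) = dg G (Suc n) j (cn G n (i - 1) \<alpha> x)"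
    and conn_deg_eq: "\<lbrakk>x \<in> cell G n; 1 \<le> j; j \<le> Suc n\<rbrakk> \<Longrightarrow>
        cn G (Suc n) j \<alpha> (dg G n j x) = dg G (Suc n) (Suc j) (dg G n j x)"
    and face_conn_lt: "\<lbrakk>x \<in> cell G n; 1 \<le> i; i < j; j \<le> n\<rbrakk> \<Longrightarrow>
        fc G (Suc n) i \<alpha> (cn G n j \<beta> x) = cn G (n - 1) (j - 1) \<beta> (fc G n i \<alpha> x)"
    and face_conn_gt: "\<lbrakk>x \<in> cell G n; 1 \<le> j; Suc j < i; i \<le> Suc n\<rbrakk> \<Longrightarrow>
        fc G (Suc n) i \<alpha> (cn G n j \<beta> x) = cn G (n - 1) j \<beta> (fc G n (i - 1) \<alpha> x)"
    and face_conn_same1: "\<lbrakk>x \<in> cell G n; 1 \<le> j; j \<le> n\<rbrakk> \<Longrightarrow>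
        fc G (Suc n) j \<alpha> (cn G n j \<alpha> x) = x"
    and face_conn_same2: "\<lbrakk>x \<in> cell G n; 1 \<le> j; j \<le> n\<rbrakk> \<Longrightarrow>
        fc G (Suc n) (Suc j) \<alpha> (cn G n j \<alpha> x) = x"
    and face_conn_opp1: "\<lbrakk>x \<in> cell G n; 1 \<le> j; j \<le> n\<rbrakk> \<Longrightarrow>
        fc G (Suc n) j \<alpha> (cn G n j (opp \<alpha>) x) = dg G (n - 1) j (fc G n j \<alpha> x)"
    and face_conn_opp2: "\<lbrakk>x \<in> cell G n; 1 \<le> j; j \<le> n\<rbrakk> \<Longrightarrow>
        fc G (Suc n) (Suc j) \<alpha> (cn G n j (opp \<alpha>) x) = dg G (n - 1) j (fc G n j \<alpha> x)"
    and comp_face_neg: "composable G n j a b \<Longrightarrow> fc G n j Neg (cp G n j a b) = fc G n j Neg a"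
    and comp_face_pos: "composable G n j a b \<Longrightarrow> fc G n j Pos (cp G n j a b) = fc G n j Pos b"
    and comp_face_lt: "\<lbrakk>composable G n j a b; 1 \<le> i; i < j\<rbrakk> \<Longrightarrow>
        fc G n i \<alpha> (cp G n j a b) = cp G (n - 1) (j - 1) (fc G n i \<alpha> a) (fc G n i \<alpha> b)"
    and comp_face_gt: "\<lbrakk>composable G n j a b; j < i; i \<le> n\<rbrakk> \<Longrightarrow>
        fc G n i \<alpha> (cp G n j a b) = cp G (n - 1) j (fc G n i \<alpha> a) (fc G n i \<alpha> b)"
    and interchange: "\<lbrakk>i \<noteq> j; composable G n i a b; composable G n i c d;
        composable G n j a c; composable G n j b d\<rbrakk> \<Longrightarrow>
        cp G n j (cp G n i a b) (cp G n i c d) = cp G n i (cp G n j a c) (cp G n j b d)"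
    and deg_comp_le: "\<lbrakk>composable G n j a b; 1 \<le> i; i \<le> j\<rbrakk> \<Longrightarrow>
        dg G n i (cp G n j a b) = cp G (Suc n) (Suc j) (dg G n i a) (dg G n i b)"
    and deg_comp_gt: "\<lbrakk>composable G n j a b; j < i; i \<le> Suc n\<rbrakk> \<Longrightarrow>
        dg G n i (cp G n j a b) = cp G (Suc n) j (dg G n i a) (dg G n i b)"
    and conn_comp_lt: "\<lbrakk>composable G n j a b; 1 \<le> i; i < j\<rbrakk> \<Longrightarrow>
        cn G n i \<alpha> (cp G n j a b) = cp G (Suc n) (Suc j) (cn G n i \<alpha> a) (cn G n i \<alpha> b)"
    and conn_comp_gt: "\<lbrakk>composable G n j a b; j < i; i \<le> n\<rbrakk> \<Longrightarrow>
        cn G n i \<alpha> (cp G n j a b) = cp G (Suc n) j (cn G n i \<alpha> a) (cn G n i \<alpha> b)"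
    and conn_comp_pos: "composable G n j a b \<Longrightarrow>
        cn G n j Pos (cp G n j a b) =
          cp G (Suc n) (Suc j) (cp G (Suc n) j (cn G n j Pos a) (dg G n j a))
                               (cp G (Suc n) j (dg G n (Suc j) a) (cn G n j Pos b))"
    and conn_comp_neg: "composable G n j a b \<Longrightarrow>
        cn G n j Neg (cp G n j a b) =
          cp G (Suc n) (Suc j) (cp G (Suc n) j (cn G n j Neg a) (dg G n (Suc j) b))
                               (cp G (Suc n) j (dg G n j b) (cn G n j Neg b))"
    and comp_assoc: "\<lbrakk>composable G n j a b; composable G n j b c\<rbrakk> \<Longrightarrow>
        cp G n j (cp G n j a b) c = cp G n j a (cp G n j b c)"
    and comp_left_id: "\<lbrakk>x \<in> cell G n; 1 \<le> j; j \<le> n\<rbrakk> \<Longrightarrow>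
        cp G n j (dg G (n - 1) j (fc G n j Neg x)) x = x"
    and comp_right_id: "\<lbrakk>x \<in> cell G n; 1 \<le> j; j \<le> n\<rbrakk> \<Longrightarrow>
        cp G n j x (dg G (n - 1) j (fc G n j Pos x)) = x"
    and conn_inv1: "\<lbrakk>x \<in> cell G n; 1 \<le> i; i \<le> n\<rbrakk> \<Longrightarrow>
        cp G (Suc n) i (cn G n i Pos x) (cn G n i Neg x) = dg G n (Suc i) x"
    and conn_inv2: "\<lbrakk>x \<in> cell G n; 1 \<le> i; i \<le> n\<rbrakk> \<Longrightarrow>
        cp G (Suc n) (Suc i) (cn G n i Pos x) (cn G n i Neg x) = dg G n i x"

definition psi :: "'a cubcat \<Rightarrow> nat \<Rightarrow> nat \<Rightarrow> 'a \<Rightarrow> 'a" where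
  "psi G n i x = cp G n (Suc i)
     (cp G n (Suc i) (cn G (n - 1) i Pos (fc G n (Suc i) Neg x)) x)
     (cn G (n - 1) i Neg (fc G n (Suc i) Pos x))"

fun psi_upto :: "'a cubcat \<Rightarrow> nat \<Rightarrow> nat \<Rightarrow> 'a \<Rightarrow> 'a" where
  "psi_upto G n 0 x = x"
| "psi_upto G n (Suc k) x = psi G n (Suc k) (psi_upto G n k x)"

definition Psi :: "'a cubcat \<Rightarrow> nat \<Rightarrow> nat \<Rightarrow> 'a \<Rightarrow> 'a" where
  "Psi G n r x = psi_upto G n (r - 1) x"

fun Phi_upto :: "'a cubcat \<Rightarrow> nat \<Rightarrow> nat \<Rightarrow> 'a \<Rightarrow> 'a" where
  "Phi_upto G n 0 x = x"
| "Phi_upto G n (Suc k) x = Phi_upto G n k (Psi G n (Suc k) x)"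

definition Phi :: "'a cubcat \<Rightarrow> nat \<Rightarrow> 'a \<Rightarrow> 'a" where
  "Phi G n x = Phi_upto G n n x"

fun faces1 :: "'a cubcat \<Rightarrow> nat \<Rightarrow> nat \<Rightarrow> sgn \<Rightarrow> 'a \<Rightarrow> 'a" where
  "faces1 G n 0 \<alpha> x = x"
| "faces1 G n (Suc k) \<alpha> x = fc G (n - k) 1 \<alpha> (faces1 G n k \<alpha> x)"

fun degs1 :: "'a cubcat \<Rightarrow> nat \<Rightarrow> nat \<Rightarrow> 'a \<Rightarrow> 'a" where
  "degs1 G m 0 y = y"
| "degs1 G m (Suc k) y = dg G (m + k) 1 (degs1 G m k y)"

text \<open>The globular source/target maps d^a_p on the omega-category \<Phi>_n(G_n).\<close>
definition glob_bd :: "'a cubcat \<Rightarrow> nat \<Rightarrow> nat \<Rightarrow> sgn \<Rightarrow> 'a \<Rightarrow> 'a" where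
  "glob_bd G n p \<alpha> u = (if p < n then degs1 G p (n - p) (faces1 G n (n - p) \<alpha> u) else u)"

text \<open>gamma G is the colimit of the chain \<Phi>_0(G_0) \<rightarrow> \<Phi>_1(G_1) \<rightarrow> ... along \<epsilon>_1.
  An element is represented by a pair (n, u) with u in \<Phi>_n(G_n); two representatives
  are equal in the colimit iff they become equal at some later stage.\<close>
definition gamma_eq :: "'a cubcat \<Rightarrow> nat \<times> 'a \<Rightarrow> nat \<times> 'a \<Rightarrow> bool" where
  "gamma_eq G nu mv \<longleftrightarrow> (\<exists>k. fst nu \<le> k \<and> fst mv \<le> k \<and>
      degs1 G (fst nu) (k - fst nu) (snd nu) = degs1 G (fst mv) (k - fst mv) (snd mv))"

definition gamma_bd :: "'a cubcat \<Rightarrow> nat \<Rightarrow> sgn \<Rightarrow> nat \<times> 'a \<Rightarrow> nat \<times> 'a" where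
  "gamma_bd G p \<alpha> nu = (fst nu, glob_bd G (fst nu) p \<alpha> (snd nu))"

definition gamma_dim :: "'a cubcat \<Rightarrow> nat \<times> 'a \<Rightarrow> nat" where
  "gamma_dim G nu = (LEAST p. gamma_eq G (gamma_bd G p Neg nu) nu \<and> gamma_eq G (gamma_bd G p Pos nu) nu)"

definition thin :: "'a cubcat \<Rightarrow> nat \<Rightarrow> 'a \<Rightarrow> bool" where
  "thin G n x \<longleftrightarrow> gamma_dim G (n, Phi G n x) < n"

inductive_set deg_conn_composites :: "'a cubcat \<Rightarrow> nat \<Rightarrow> 'a set" for G n where
  deg: "\<lbrakk>y \<in> cell G (n - 1); 1 \<le> n; 1 \<le> i; i \<le> n\<rbrakk> \<Longrightarrow> dg G (n - 1) i y \<in> deg_conn_composites G n"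
| conn: "\<lbrakk>z \<in> cell G (n - 1); 1 \<le> n; 1 \<le> j; j \<le> n - 1\<rbrakk> \<Longrightarrow> cn G (n - 1) j \<alpha> z \<in> deg_conn_composites G n"
| comp: "\<lbrakk>a \<in> deg_conn_composites G n; b \<in> deg_conn_composites G n; composable G n k a b\<rbrakk>
          \<Longrightarrow> cp G n k a b \<in> deg_conn_composites G n"

end

theory Submission
  imports Defs
begin

text \<open>By the construction of gamma G, x is thin exactly when its fold Phi_n x has the form
  \<epsilon>_1 y. Each folding operation psi_i can be undone by composing with degeneracies and
  connections, so if Phi_n x = \<epsilon>_1 y then x itself is such a composite. Conversely, Phi_n is
  applied one psi_k at a time: psi_k sends degeneracies to degeneracies, carries a composite
  x \<circ>_j y to a composite of psi_k x, psi_k y and degeneracies \<epsilon>_k, and the whole fold sends a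
  connection to an element \<epsilon>_1 z. An induction over the stages of the fold therefore shows
  that composites of degeneracies and connections fold to elements \<epsilon>_1 z. The computation
  for negative connections follows from the one for positive connections by reversing all
  directions.\<close>

lemma opp_opp [simp]: "opp (opp \<alpha>) = \<alpha>"
  by (cases \<alpha>) simp_all

definition reverse :: "'a cubcat \<Rightarrow> 'a cubcat" where
  "reverse G = G\<lparr>fc := \<lambda>n i \<alpha>. fc G n i (opp \<alpha>), cn := \<lambda>n i \<alpha>. cn G n i (opp \<alpha>),
     cp := \<lambda>n j a b. cp G n j b a\<rparr>"

lemma reverse_simps [simp]:
  "cell (reverse G) = cell G" "dg (reverse G) = dg G"
  "fc (reverse G) n i \<alpha> = fc G n i (opp \<alpha>)" "cn (reverse G) n i \<alpha> = cn G n i (opp \<alpha>)"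
  "cp (reverse G) n j a b = cp G n j b a"
  by (simp_all add: reverse_def)

lemma composable_reverse [simp]: "composable (reverse G) n j a b \<longleftrightarrow> composable G n j b a"
  by (auto simp: composable_def)

fun comp_list :: "'a cubcat \<Rightarrow> nat \<Rightarrow> nat \<Rightarrow> 'a list \<Rightarrow> 'a" where
  "comp_list G n h [] = undefined"
| "comp_list G n h [a] = a"
| "comp_list G n h (a # b # as) = cp G n h a (comp_list G n h (b # as))"

fun comp_chain :: "'a cubcat \<Rightarrow> nat \<Rightarrow> nat \<Rightarrow> 'a list \<Rightarrow> bool" where
  "comp_chain G n h [] = False"
| "comp_chain G n h [a] = (a \<in> cell G n \<and> 1 \<le> h \<and> h \<le> n)"
| "comp_chain G n h (a # b # as) =
     (a \<in> cell G n \<and> fc G n h Pos a = fc G n h Neg b \<and> comp_chain G n h (b # as))"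

context cubical_omega_cat_conn
begin

lemma cubical_omega_cat_conn_reverse: "cubical_omega_cat_conn (reverse G)"
proof unfold_locales
  fix x n i \<alpha> assume "x \<in> cell (reverse G) n" "1 \<le> i" "i \<le> n"
  then show "fc (reverse G) n i \<alpha> x \<in> cell (reverse G) (n - 1)"
    using face_closed by simp
next
  fix x n i j \<alpha> \<beta> assume "x \<in> cell (reverse G) n" "1 \<le> i" "i < j" "j \<le> n"
  then show "fc (reverse G) (n - 1) i \<alpha> (fc (reverse G) n j \<beta> x) =
      fc (reverse G) (n - 1) (j - 1) \<beta> (fc (reverse G) n i \<alpha> x)"
    using face_face by simp
next
  fix x n j \<alpha> assume "x \<in> cell (reverse G) n" "1 \<le> j" "j \<le> n"
  then show "fc (reverse G) (Suc n) j \<alpha> (cn (reverse G) n j (opp \<alpha>) x) =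
      dg (reverse G) (n - 1) j (fc (reverse G) n j \<alpha> x)"
    and "fc (reverse G) (Suc n) (Suc j) \<alpha> (cn (reverse G) n j (opp \<alpha>) x) =
      dg (reverse G) (n - 1) j (fc (reverse G) n j \<alpha> x)"
    using face_conn_opp1[of x n j "opp \<alpha>"] face_conn_opp2[of x n j "opp \<alpha>"] by simp_all
next
  fix i j n a b c d
  assume "i \<noteq> j" "composable (reverse G) n i a b" "composable (reverse G) n i c d"
    "composable (reverse G) n j a c" "composable (reverse G) n j b d"
  then show "cp (reverse G) n j (cp (reverse G) n i a b) (cp (reverse G) n i c d) =
      cp (reverse G) n i (cp (reverse G) n j a c) (cp (reverse G) n j b d)"
    using interchange[of i j n d c b a] by simp
next
  fix n j a b assume "composable (reverse G) n j a b"
  then show "cn (reverse G) n j Pos (cp (reverse G) n j a b) =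
      cp (reverse G) (Suc n) (Suc j)
        (cp (reverse G) (Suc n) j (cn (reverse G) n j Pos a) (dg (reverse G) n j a))
        (cp (reverse G) (Suc n) j (dg (reverse G) n (Suc j) a) (cn (reverse G) n j Pos b))"
    and "cn (reverse G) n j Neg (cp (reverse G) n j a b) =
      cp (reverse G) (Suc n) (Suc j)
        (cp (reverse G) (Suc n) j (cn (reverse G) n j Neg a) (dg (reverse G) n (Suc j) b))
        (cp (reverse G) (Suc n) j (dg (reverse G) n j b) (cn (reverse G) n j Neg b))"
    using conn_comp_neg[of n j b a] conn_comp_pos[of n j b a] by simp_all
next
  fix x n j assume "x \<in> cell (reverse G) n" "1 \<le> j" "j \<le> n"
  then show "cp (reverse G) n j (dg (reverse G) (n - 1) j (fc (reverse G) n j Neg x)) x = x"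
    and "cp (reverse G) n j x (dg (reverse G) (n - 1) j (fc (reverse G) n j Pos x)) = x"
    using comp_left_id comp_right_id by simp_all
qed (simp_all add: deg_closed conn_closed comp_closed deg_deg face_deg_lt face_deg_gt face_deg_eq
  conn_conn conn_conn_eq conn_deg_lt conn_deg_gt conn_deg_eq face_conn_lt face_conn_gt
  face_conn_same1 face_conn_same2 comp_face_neg comp_face_pos comp_face_lt comp_face_gt
  deg_comp_le deg_comp_gt conn_comp_lt conn_comp_gt comp_assoc conn_inv1 conn_inv2)

declare composable_def [simp]
  deg_closed [simp] conn_closed [simp] comp_closed [simp] comp_assoc [simp]
  face_deg_eq [simp] face_conn_same1 [simp] face_conn_same2 [simp]
  comp_face_neg [simp] comp_face_pos [simp] conn_inv1 [simp] conn_inv2 [simp]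

lemma face_closed_Suc [simp]:
  "x \<in> cell G (Suc n) \<Longrightarrow> 1 \<le> i \<Longrightarrow> i \<le> Suc n \<Longrightarrow> fc G (Suc n) i \<alpha> x \<in> cell G n"
  using face_closed[of x "Suc n" i \<alpha>] by simp

lemma face_face_Suc [simp]:
  "x \<in> cell G (Suc (Suc n)) \<Longrightarrow> 1 \<le> i \<Longrightarrow> i < j \<Longrightarrow> j \<le> Suc (Suc n) \<Longrightarrow>
   fc G (Suc n) i \<alpha> (fc G (Suc (Suc n)) j \<beta> x) = fc G (Suc n) (j - 1) \<beta> (fc G (Suc (Suc n)) i \<alpha> x)"
  using face_face[of x "Suc (Suc n)" i j \<alpha> \<beta>] by simp

lemma face_deg_lt_Suc [simp]:
  "x \<in> cell G (Suc n) \<Longrightarrow> 1 \<le> i \<Longrightarrow> i < j \<Longrightarrow> j \<le> Suc (Suc n) \<Longrightarrow>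
   fc G (Suc (Suc n)) i \<alpha> (dg G (Suc n) j x) = dg G n (j - 1) (fc G (Suc n) i \<alpha> x)"
  using face_deg_lt[of x "Suc n" i j \<alpha>] by simp

lemma face_deg_gt_Suc [simp]:
  "x \<in> cell G (Suc n) \<Longrightarrow> 1 \<le> j \<Longrightarrow> j < i \<Longrightarrow> i \<le> Suc (Suc n) \<Longrightarrow>
   fc G (Suc (Suc n)) i \<alpha> (dg G (Suc n) j x) = dg G n j (fc G (Suc n) (i - 1) \<alpha> x)"
  using face_deg_gt[of x "Suc n" j i \<alpha>] by simp

lemma face_conn_lt_Suc [simp]:
  "x \<in> cell G (Suc n) \<Longrightarrow> 1 \<le> i \<Longrightarrow> i < j \<Longrightarrow> j \<le> Suc n \<Longrightarrow>
   fc G (Suc (Suc n)) i \<alpha> (cn G (Suc n) j \<beta> x) = cn G n (j - 1) \<beta> (fc G (Suc n) i \<alpha> x)"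
  using face_conn_lt[of x "Suc n" i j \<alpha> \<beta>] by simp

lemma face_conn_gt_Suc [simp]:
  "x \<in> cell G (Suc n) \<Longrightarrow> 1 \<le> j \<Longrightarrow> Suc j < i \<Longrightarrow> i \<le> Suc (Suc n) \<Longrightarrow>
   fc G (Suc (Suc n)) i \<alpha> (cn G (Suc n) j \<beta> x) = cn G n j \<beta> (fc G (Suc n) (i - 1) \<alpha> x)"
  using face_conn_gt[of x "Suc n" j i \<alpha> \<beta>] by simp

lemma face_conn_opp1_Suc [simp]:
  "x \<in> cell G (Suc n) \<Longrightarrow> 1 \<le> j \<Longrightarrow> j \<le> Suc n \<Longrightarrow> \<beta> = opp \<alpha> \<Longrightarrow>
   fc G (Suc (Suc n)) j \<alpha> (cn G (Suc n) j \<beta> x) = dg G n j (fc G (Suc n) j \<alpha> x)"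
  using face_conn_opp1[of x "Suc n" j \<alpha>] by simp

lemma face_conn_opp2_Suc [simp]:
  "x \<in> cell G (Suc n) \<Longrightarrow> 1 \<le> j \<Longrightarrow> j \<le> Suc n \<Longrightarrow> \<beta> = opp \<alpha> \<Longrightarrow>
   fc G (Suc (Suc n)) (Suc j) \<alpha> (cn G (Suc n) j \<beta> x) = dg G n j (fc G (Suc n) j \<alpha> x)"
  using face_conn_opp2[of x "Suc n" j \<alpha>] by simp

lemma comp_face_lt_Suc [simp]:
  "composable G (Suc n) j a b \<Longrightarrow> 1 \<le> i \<Longrightarrow> i < j \<Longrightarrow>
   fc G (Suc n) i \<alpha> (cp G (Suc n) j a b) = cp G n (j - 1) (fc G (Suc n) i \<alpha> a) (fc G (Suc n) i \<alpha> b)"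
  using comp_face_lt[of "Suc n" j a b i \<alpha>] by simp

lemma comp_face_gt_Suc [simp]:
  "composable G (Suc n) j a b \<Longrightarrow> j < i \<Longrightarrow> i \<le> Suc n \<Longrightarrow>
   fc G (Suc n) i \<alpha> (cp G (Suc n) j a b) = cp G n j (fc G (Suc n) i \<alpha> a) (fc G (Suc n) i \<alpha> b)"
  using comp_face_gt[of "Suc n" j a b i \<alpha>] by simp

lemma comp_left_id_Suc [simp]:
  "x \<in> cell G (Suc n) \<Longrightarrow> 1 \<le> j \<Longrightarrow> j \<le> Suc n \<Longrightarrow> e = dg G n j (fc G (Suc n) j Neg x) \<Longrightarrow>
   cp G (Suc n) j e x = x"
  using comp_left_id[of x "Suc n" j] by simp

lemma comp_right_id_Suc [simp]:
  "x \<in> cell G (Suc n) \<Longrightarrow> 1 \<le> j \<Longrightarrow> j \<le> Suc n \<Longrightarrow> e = dg G n j (fc G (Suc n) j Pos x) \<Longrightarrow>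
   cp G (Suc n) j x e = x"
  using comp_right_id[of x "Suc n" j] by simp

lemma deg_deg_swap [simp]:
  "x \<in> cell G n \<Longrightarrow> 1 \<le> i \<Longrightarrow> i \<le> j \<Longrightarrow> j \<le> Suc n \<Longrightarrow>
   dg G (Suc n) (Suc j) (dg G n i x) = dg G (Suc n) i (dg G n j x)"
  using deg_deg[of x n i j] by simp

lemma psi_closed [simp]:
  "x \<in> cell G (Suc n) \<Longrightarrow> 1 \<le> i \<Longrightarrow> i \<le> n \<Longrightarrow> psi G (Suc n) i x \<in> cell G (Suc n)"
  unfolding psi_def by (simp del: comp_assoc)

lemma face_Suc_psi [simp]:
  "x \<in> cell G (Suc (Suc m)) \<Longrightarrow> 1 \<le> i \<Longrightarrow> i \<le> Suc m \<Longrightarrow>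
   fc G (Suc (Suc m)) (Suc i) \<alpha> (psi G (Suc (Suc m)) i x) =
     dg G m i (fc G (Suc m) i \<alpha> (fc G (Suc (Suc m)) i \<alpha> x))"
  unfolding psi_def by (cases \<alpha>) (simp_all del: comp_assoc)

lemma face_Neg_psi [simp]:
  "x \<in> cell G (Suc (Suc m)) \<Longrightarrow> 1 \<le> i \<Longrightarrow> i \<le> Suc m \<Longrightarrow>
   fc G (Suc (Suc m)) i Neg (psi G (Suc (Suc m)) i x) =
     cp G (Suc m) i (fc G (Suc (Suc m)) i Neg x) (fc G (Suc (Suc m)) (Suc i) Pos x)"
  unfolding psi_def by (simp del: comp_assoc)

lemma face_Pos_psi [simp]:
  "x \<in> cell G (Suc (Suc m)) \<Longrightarrow> 1 \<le> i \<Longrightarrow> i \<le> Suc m \<Longrightarrow>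
   fc G (Suc (Suc m)) i Pos (psi G (Suc (Suc m)) i x) =
     cp G (Suc m) i (fc G (Suc (Suc m)) (Suc i) Neg x) (fc G (Suc (Suc m)) i Pos x)"
  unfolding psi_def by (simp del: comp_assoc)

lemma face_psi_lt [simp]:
  "x \<in> cell G (Suc (Suc m)) \<Longrightarrow> 1 \<le> k \<Longrightarrow> k < i \<Longrightarrow> i \<le> Suc m \<Longrightarrow>
   fc G (Suc (Suc m)) k \<alpha> (psi G (Suc (Suc m)) i x) = psi G (Suc m) (i - 1) (fc G (Suc (Suc m)) k \<alpha> x)"
  unfolding psi_def by (simp del: comp_assoc)

lemma face_psi_gt [simp]:
  "x \<in> cell G (Suc (Suc m)) \<Longrightarrow> 1 \<le> i \<Longrightarrow> Suc i < k \<Longrightarrow> k \<le> Suc (Suc m) \<Longrightarrow>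
   fc G (Suc (Suc m)) k \<alpha> (psi G (Suc (Suc m)) i x) = psi G (Suc m) i (fc G (Suc (Suc m)) k \<alpha> x)"
  unfolding psi_def by (simp del: comp_assoc)

lemma comp_chain_cells: "comp_chain G n h as \<Longrightarrow> 1 \<le> h \<and> h \<le> n \<and> (\<forall>a\<in>set as. a \<in> cell G n)"
  by (induction as rule: induct_list012) auto

lemma comp_list_closed_faces:
  "comp_chain G n h as \<Longrightarrow> comp_list G n h as \<in> cell G n
     \<and> fc G n h Neg (comp_list G n h as) = fc G n h Neg (hd as)
     \<and> fc G n h Pos (comp_list G n h as) = fc G n h Pos (last as)"
proof (induction as rule: induct_list012)
  case (3 a b as)
  then show ?case using comp_chain_cells[of n h "b # as"] by auto
qed auto

lemma comp_list_closed [simp]: "comp_chain G n h as \<Longrightarrow> comp_list G n h as \<in> cell G n"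
  and face_Neg_comp_list [simp]:
    "comp_chain G n h as \<Longrightarrow> fc G n h Neg (comp_list G n h as) = fc G n h Neg (hd as)"
  and face_Pos_comp_list [simp]:
    "comp_chain G n h as \<Longrightarrow> fc G n h Pos (comp_list G n h as) = fc G n h Pos (last as)"
  using comp_list_closed_faces by blast+

lemma face_comp_list:
  assumes "comp_chain G (Suc n) h as" "k \<noteq> h" "1 \<le> k" "k \<le> Suc n"
  defines "h' \<equiv> if k < h then h - 1 else h"
  shows "comp_chain G n h' (map (fc G (Suc n) k \<alpha>) as) \<and>
    fc G (Suc n) k \<alpha> (comp_list G (Suc n) h as) = comp_list G n h' (map (fc G (Suc n) k \<alpha>) as)"
  using assms(1)
proof (induction as rule: induct_list012)
  case (2 a)
  then show ?case using assms(2-4) by (auto simp: h'_def)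
next
  case (3 a b as)
  have cells: "1 \<le> h" "h \<le> Suc n" "b \<in> cell G (Suc n)" "a \<in> cell G (Suc n)"
    using comp_chain_cells[OF "3.prems"] by auto
  have "fc G n h' Pos (fc G (Suc n) k \<alpha> a) = fc G n h' Neg (fc G (Suc n) k \<alpha> b)"
  proof (cases "k < h")
    case True
    then show ?thesis using "3.prems" cells assms(3) face_face[of a "Suc n" k h \<alpha> Pos]
        face_face[of b "Suc n" k h \<alpha> Neg]
      by (simp add: h'_def)
  next
    case False
    then have "h < k" using assms(2) by simp
    then show ?thesis using "3.prems" cells assms(4) face_face[of a "Suc n" h k Pos \<alpha>]
        face_face[of b "Suc n" h k Neg \<alpha>]
      by (simp add: h'_def)
  qed
  then show ?case using 3 cells assms(2-4) by (auto simp: h'_def)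
qed auto

lemma comp_chain_map2:
  "comp_chain G (Suc n) h as \<Longrightarrow> comp_chain G (Suc n) h bs \<Longrightarrow> h \<noteq> v \<Longrightarrow> 1 \<le> v \<Longrightarrow> v \<le> Suc n \<Longrightarrow>
   list_all2 (\<lambda>a b. fc G (Suc n) v Pos a = fc G (Suc n) v Neg b) as bs \<Longrightarrow>
   comp_chain G (Suc n) h (map2 (cp G (Suc n) v) as bs)"
proof (induction as arbitrary: bs rule: induct_list012)
  case (2 a)
  then obtain b where "bs = [b]" by (cases bs) (auto simp: list_all2_Cons1)
  then show ?case using 2 by auto
next
  case (3 a a' as)
  from "3.prems"(6) obtain b b' bs' where bs: "bs = b # b' # bs'"
    by (auto simp: list_all2_Cons1)
  have cells: "1 \<le> h" "h \<le> Suc n" "a \<in> cell G (Suc n)" "b \<in> cell G (Suc n)"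
      "a' \<in> cell G (Suc n)" "b' \<in> cell G (Suc n)"
    using comp_chain_cells[OF "3.prems"(1)] comp_chain_cells[OF "3.prems"(2)] bs by auto
  have "fc G (Suc n) h Pos (cp G (Suc n) v a b) = fc G (Suc n) h Neg (cp G (Suc n) v a' b')"
  proof (cases "h < v")
    case True
    then show ?thesis using 3 bs cells comp_face_lt[of "Suc n" v a b h Pos]
        comp_face_lt[of "Suc n" v a' b' h Neg] by auto
  next
    case False
    then show ?thesis using 3 bs cells comp_face_gt[of "Suc n" v a b h Pos]
        comp_face_gt[of "Suc n" v a' b' h Neg] by auto
  qed
  then show ?case using "3.IH"(2)[of "b' # bs'"] 3 bs cells by auto
qed auto

lemma comp_list_interchange:
  "comp_chain G (Suc n) h as \<Longrightarrow> comp_chain G (Suc n) h bs \<Longrightarrow> h \<noteq> v \<Longrightarrow> 1 \<le> v \<Longrightarrow> v \<le> Suc n \<Longrightarrow>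
   list_all2 (\<lambda>a b. fc G (Suc n) v Pos a = fc G (Suc n) v Neg b) as bs \<Longrightarrow>
   cp G (Suc n) v (comp_list G (Suc n) h as) (comp_list G (Suc n) h bs) =
     comp_list G (Suc n) h (map2 (cp G (Suc n) v) as bs)"
proof (induction as arbitrary: bs rule: induct_list012)
  case (2 a)
  then obtain b where "bs = [b]" by (cases bs) (auto simp: list_all2_Cons1)
  then show ?case using 2 by auto
next
  case (3 a a' as)
  from "3.prems"(6) obtain b b' bs' where bs: "bs = b # b' # bs'"
    by (auto simp: list_all2_Cons1)
  let ?A = "comp_list G (Suc n) h (a' # as)" and ?B = "comp_list G (Suc n) h (b' # bs')"
  have chains: "comp_chain G (Suc n) h (a' # as)" "comp_chain G (Suc n) h (b' # bs')"
    and cells: "1 \<le> h" "h \<le> Suc n" "a \<in> cell G (Suc n)" "b \<in> cell G (Suc n)"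
    using "3.prems"(1,2) comp_chain_cells[OF "3.prems"(1)] bs by auto
  have tails: "list_all2 (\<lambda>a b. fc G (Suc n) v Pos a = fc G (Suc n) v Neg b) (a' # as) (b' # bs')"
    and heads: "fc G (Suc n) v Pos a = fc G (Suc n) v Neg b"
    using "3.prems"(6) bs by auto
  have "map (fc G (Suc n) v Pos) (a' # as) = map (fc G (Suc n) v Neg) (b' # bs')"
    using tails by (induction rule: list_all2_induct) auto
  then have "fc G (Suc n) v Pos ?A = fc G (Suc n) v Neg ?B"
    using face_comp_list[OF chains(1), of v Pos] face_comp_list[OF chains(2), of v Neg] "3.prems"(3-5)
    by auto
  then have "cp G (Suc n) v (cp G (Suc n) h a ?A) (cp G (Suc n) h b ?B) =
      cp G (Suc n) h (cp G (Suc n) v a b) (cp G (Suc n) v ?A ?B)"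
    using 3 bs cells chains heads by (intro interchange) auto
  then show ?case using "3.IH"(2)[OF chains "3.prems"(3-5) tails] bs by simp
qed auto

text \<open>The 3 by 3 grid whose middle column is psi_i z, a composite in direction i+1, collapses
  row by row to z: its outer rows are Gamma+_i \<circ>_i Gamma-_i = \<epsilon>_(i+1) and its middle row is
  z between identities.\<close>

lemma recover_from_psi:
  assumes z: "z \<in> cell G (Suc (Suc m))" and i: "1 \<le> i" "i \<le> Suc m"
  shows "cp G (Suc (Suc m)) i
     (cp G (Suc (Suc m)) i
       (cp G (Suc (Suc m)) (Suc i) (dg G (Suc m) i (fc G (Suc (Suc m)) i Neg z))
          (cn G (Suc m) i Pos (fc G (Suc (Suc m)) (Suc i) Pos z)))
       (psi G (Suc (Suc m)) i z))
     (cp G (Suc (Suc m)) (Suc i) (cn G (Suc m) i Neg (fc G (Suc (Suc m)) (Suc i) Neg z))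
        (dg G (Suc m) i (fc G (Suc (Suc m)) i Pos z))) = z"
proof -
  let ?N = "Suc (Suc m)"
  let ?a = "fc G ?N i Neg z" and ?b = "fc G ?N i Pos z"
    and ?c = "fc G ?N (Suc i) Neg z" and ?d = "fc G ?N (Suc i) Pos z"
  let ?left = "[dg G (Suc m) i (dg G m i (fc G (Suc m) i Neg ?a)), dg G (Suc m) i ?a, cn G (Suc m) i Pos ?d]"
    and ?mid = "[cn G (Suc m) i Pos ?c, z, cn G (Suc m) i Neg ?d]"
    and ?right = "[cn G (Suc m) i Neg ?c, dg G (Suc m) i ?b, dg G (Suc m) i (dg G m i (fc G (Suc m) i Pos ?b))]"
  have "psi G ?N i z = comp_list G ?N (Suc i) ?mid"
    unfolding psi_def using z i by simp
  moreover have "cp G ?N (Suc i) (dg G (Suc m) i ?a) (cn G (Suc m) i Pos ?d) = comp_list G ?N (Suc i) ?left"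
    and "cp G ?N (Suc i) (cn G (Suc m) i Neg ?c) (dg G (Suc m) i ?b) = comp_list G ?N (Suc i) ?right"
    using z i by simp_all
  moreover have chain: "comp_chain G ?N (Suc i) (map2 (cp G ?N i) ?left ?mid)"
    by (rule comp_chain_map2) (use z i in auto)
  moreover have "cp G ?N i (comp_list G ?N (Suc i) ?left) (comp_list G ?N (Suc i) ?mid) =
      comp_list G ?N (Suc i) (map2 (cp G ?N i) ?left ?mid)"
    by (rule comp_list_interchange) (use z i in auto)
  moreover have "cp G ?N i (comp_list G ?N (Suc i) (map2 (cp G ?N i) ?left ?mid)) (comp_list G ?N (Suc i) ?right) =
      comp_list G ?N (Suc i) (map2 (cp G ?N i) (map2 (cp G ?N i) ?left ?mid) ?right)"
    by (rule comp_list_interchange) (use chain z i in auto)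
  moreover have "comp_list G ?N (Suc i) (map2 (cp G ?N i) (map2 (cp G ?N i) ?left ?mid) ?right) = z"
    using z i by simp
  ultimately show ?thesis by simp
qed

lemma deg_in_composites:
  "y \<in> cell G m \<Longrightarrow> 1 \<le> i \<Longrightarrow> i \<le> Suc m \<Longrightarrow> dg G m i y \<in> deg_conn_composites G (Suc m)"
  using deg_conn_composites.deg[of y G "Suc m" i] by simp

lemma conn_in_composites:
  "z \<in> cell G m \<Longrightarrow> 1 \<le> j \<Longrightarrow> j \<le> m \<Longrightarrow> cn G m j \<alpha> z \<in> deg_conn_composites G (Suc m)"
  using deg_conn_composites.conn[of z G "Suc m" j] by simp

lemma composite_if_psi_composite:
  assumes z: "z \<in> cell G (Suc (Suc m))" and i: "1 \<le> i" "i \<le> Suc m"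
    and psi: "psi G (Suc (Suc m)) i z \<in> deg_conn_composites G (Suc (Suc m))"
  shows "z \<in> deg_conn_composites G (Suc (Suc m))"
proof -
  have "cp G (Suc (Suc m)) i
     (cp G (Suc (Suc m)) i
       (cp G (Suc (Suc m)) (Suc i) (dg G (Suc m) i (fc G (Suc (Suc m)) i Neg z))
          (cn G (Suc m) i Pos (fc G (Suc (Suc m)) (Suc i) Pos z)))
       (psi G (Suc (Suc m)) i z))
     (cp G (Suc (Suc m)) (Suc i) (cn G (Suc m) i Neg (fc G (Suc (Suc m)) (Suc i) Neg z))
        (dg G (Suc m) i (fc G (Suc (Suc m)) i Pos z))) \<in> deg_conn_composites G (Suc (Suc m))"
    by (intro deg_conn_composites.comp deg_in_composites conn_in_composites psi)
      (use z i in \<open>simp_all del: comp_assoc\<close>)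
  then show ?thesis using recover_from_psi[OF z i] by simp
qed

lemma psi_upto_closed: "x \<in> cell G n \<Longrightarrow> k < n \<Longrightarrow> psi_upto G n k x \<in> cell G n"
proof (induction k)
  case (Suc k)
  then obtain m where "n = Suc (Suc m)" by (cases n; cases "n - 1") auto
  then show ?case using Suc by simp
qed simp

lemma composite_if_psi_upto_composite:
  "x \<in> cell G n \<Longrightarrow> k < n \<Longrightarrow> psi_upto G n k x \<in> deg_conn_composites G n \<Longrightarrow>
   x \<in> deg_conn_composites G n"
proof (induction k)
  case (Suc k)
  then obtain m where n: "n = Suc (Suc m)" by (cases n; cases "n - 1") auto
  have "psi_upto G n k x \<in> deg_conn_composites G n"
    using composite_if_psi_composite[of "psi_upto G n k x" m "Suc k"] Suc psi_upto_closed[of x n k] n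
    by simp
  then show ?case using Suc by simp
qed simp

lemma Psi_closed: "x \<in> cell G n \<Longrightarrow> r \<le> n \<Longrightarrow> Psi G n r x \<in> cell G n"
  unfolding Psi_def by (cases r) (auto intro: psi_upto_closed)

lemma Phi_upto_closed: "x \<in> cell G n \<Longrightarrow> k \<le> n \<Longrightarrow> Phi_upto G n k x \<in> cell G n"
  by (induction k arbitrary: x) (auto simp: Psi_closed)

lemma composite_if_Phi_upto_composite:
  "x \<in> cell G n \<Longrightarrow> k \<le> n \<Longrightarrow> Phi_upto G n k x \<in> deg_conn_composites G n \<Longrightarrow>
   x \<in> deg_conn_composites G n"
proof (induction k arbitrary: x)
  case (Suc k)
  have "Psi G n (Suc k) x \<in> deg_conn_composites G n" using Suc Psi_closed by simp
  then show ?case using composite_if_psi_upto_composite[of x n k] Suc(2,3) unfolding Psi_def by simp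
qed simp

lemma Phi_closed: "x \<in> cell G n \<Longrightarrow> Phi G n x \<in> cell G n"
  unfolding Phi_def by (rule Phi_upto_closed) auto

lemma composite_if_Phi_composite:
  "x \<in> cell G n \<Longrightarrow> Phi G n x \<in> deg_conn_composites G n \<Longrightarrow> x \<in> deg_conn_composites G n"
  unfolding Phi_def by (rule composite_if_Phi_upto_composite) auto

lemma degs1_closed: "y \<in> cell G m \<Longrightarrow> degs1 G m k y \<in> cell G (m + k)"
  by (induction k) auto

lemma degs1_inj: "a \<in> cell G m \<Longrightarrow> b \<in> cell G m \<Longrightarrow> degs1 G m k a = degs1 G m k b \<Longrightarrow> a = b"
proof (induction k)
  case (Suc k)
  then have "fc G (Suc (m + k)) 1 Neg (dg G (m + k) 1 (degs1 G m k a)) =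
      fc G (Suc (m + k)) 1 Neg (dg G (m + k) 1 (degs1 G m k b))"
    by simp
  then show ?case using Suc degs1_closed[of a m k] degs1_closed[of b m k] by simp
qed simp

lemma faces1_closed: "x \<in> cell G n \<Longrightarrow> k \<le> n \<Longrightarrow> faces1 G n k \<alpha> x \<in> cell G (n - k)"
proof (induction k)
  case (Suc k)
  then obtain m where "n - k = Suc m" by (cases "n - k") auto
  moreover have "n - Suc k = m" using \<open>n - k = Suc m\<close> by arith
  ultimately show ?case using Suc by simp
qed simp

lemma glob_bd_closed: "u \<in> cell G n \<Longrightarrow> glob_bd G n p \<alpha> u \<in> cell G n"
proof (cases "p < n")
  case True
  moreover assume "u \<in> cell G n"
  ultimately have "faces1 G n (n - p) \<alpha> u \<in> cell G p" using faces1_closed[of u n "n - p" \<alpha>] by simp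
  then show ?thesis using True degs1_closed[of _ p "n - p"] by (simp add: glob_bd_def)
qed (simp add: glob_bd_def)

lemma gamma_eq_same_stage:
  assumes "a \<in> cell G n" "u \<in> cell G n"
  shows "gamma_eq G (n, a) (n, u) \<longleftrightarrow> a = u"
  using degs1_inj[OF assms] by (auto simp: gamma_eq_def)

lemma gamma_dim_less_iff_bd_fixed:
  assumes u: "u \<in> cell G n"
  shows "gamma_dim G (n, u) < n \<longleftrightarrow> (\<exists>p<n. glob_bd G n p Neg u = u \<and> glob_bd G n p Pos u = u)"
proof -
  define Q where "Q p \<longleftrightarrow> gamma_eq G (gamma_bd G p Neg (n, u)) (n, u) \<and>
      gamma_eq G (gamma_bd G p Pos (n, u)) (n, u)" for p
  have Q_iff: "Q p \<longleftrightarrow> glob_bd G n p Neg u = u \<and> glob_bd G n p Pos u = u" for p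
    unfolding Q_def gamma_bd_def using gamma_eq_same_stage glob_bd_closed u by simp
  have "Q n" unfolding Q_iff glob_bd_def by simp
  then have "(LEAST p. Q p) < n \<longleftrightarrow> (\<exists>p<n. Q p)"
    by (meson LeastI Least_le le_less_trans)
  then show ?thesis unfolding gamma_dim_def Q_def[symmetric] Q_iff .
qed

lemma bd_fixed_iff_deg1:
  assumes u: "u \<in> cell G n"
  shows "(\<exists>p<n. glob_bd G n p Neg u = u \<and> glob_bd G n p Pos u = u) \<longleftrightarrow>
    (\<exists>m y. n = Suc m \<and> y \<in> cell G m \<and> u = dg G m 1 y)"
proof
  assume "\<exists>p<n. glob_bd G n p Neg u = u \<and> glob_bd G n p Pos u = u"
  then obtain p where p: "p < n" and fixed: "degs1 G p (n - p) (faces1 G n (n - p) Neg u) = u"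
    unfolding glob_bd_def by auto
  obtain r where r: "n - p = Suc r" using p by (cases "n - p") auto
  have "degs1 G p r (faces1 G n (n - p) Neg u) \<in> cell G (p + r)"
    using faces1_closed[OF u, of "n - p" Neg] p by (intro degs1_closed) simp
  moreover have "u = dg G (p + r) 1 (degs1 G p r (faces1 G n (n - p) Neg u))"
    using fixed r by simp
  ultimately show "\<exists>m y. n = Suc m \<and> y \<in> cell G m \<and> u = dg G m 1 y"
    using p r by (intro exI[of _ "p + r"]) auto
next
  assume "\<exists>m y. n = Suc m \<and> y \<in> cell G m \<and> u = dg G m 1 y"
  then obtain m y where "n = Suc m" "y \<in> cell G m" "u = dg G m 1 y" by blast
  then show "\<exists>p<n. glob_bd G n p Neg u = u \<and> glob_bd G n p Pos u = u"
    by (intro exI[of _ m]) (simp add: glob_bd_def)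
qed

lemma thin_iff_Phi_deg1:
  "x \<in> cell G n \<Longrightarrow> thin G n x \<longleftrightarrow> (\<exists>m y. n = Suc m \<and> y \<in> cell G m \<and> Phi G n x = dg G m 1 y)"
  unfolding thin_def using gamma_dim_less_iff_bd_fixed bd_fixed_iff_deg1 Phi_closed by simp

lemma composite_if_thin: "x \<in> cell G n \<Longrightarrow> thin G n x \<Longrightarrow> x \<in> deg_conn_composites G n"
  using thin_iff_Phi_deg1[of x n] composite_if_Phi_composite[of x n] deg_in_composites by fastforce


declare deg_comp_le [simp] deg_comp_gt [simp] conn_comp_lt [simp] conn_comp_gt [simp]
  conn_deg_lt [simp] conn_deg_gt [simp] conn_deg_eq [simp] conn_conn [simp] conn_conn_eq [simp]

lemma psi_deg_below:
  "y \<in> cell G (Suc m) \<Longrightarrow> 1 \<le> j \<Longrightarrow> j \<le> i \<Longrightarrow> i \<le> m \<Longrightarrow>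
   psi G (Suc (Suc m)) (Suc i) (dg G (Suc m) j y) = dg G (Suc m) j (psi G (Suc m) i y)"
  unfolding psi_def by simp

lemma psi_deg_same [simp]:
  "y \<in> cell G (Suc m) \<Longrightarrow> 1 \<le> i \<Longrightarrow> i \<le> Suc m \<Longrightarrow>
   psi G (Suc (Suc m)) i (dg G (Suc m) i y) = dg G (Suc m) i y"
  unfolding psi_def by simp

lemma psi_deg_Suc [simp]:
  "y \<in> cell G (Suc m) \<Longrightarrow> 1 \<le> i \<Longrightarrow> i \<le> Suc m \<Longrightarrow>
   psi G (Suc (Suc m)) i (dg G (Suc m) (Suc i) y) = dg G (Suc m) i y"
  unfolding psi_def by simp

lemma psi_deg_above:
  "y \<in> cell G (Suc m) \<Longrightarrow> 1 \<le> i \<Longrightarrow> Suc i < j \<Longrightarrow> j \<le> Suc (Suc m) \<Longrightarrow>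
   psi G (Suc (Suc m)) i (dg G (Suc m) j y) = dg G (Suc m) j (psi G (Suc m) i y)"
  unfolding psi_def by simp

lemma psi_conn_above:
  "z \<in> cell G (Suc m) \<Longrightarrow> 1 \<le> i \<Longrightarrow> Suc i < j \<Longrightarrow> j \<le> Suc m \<Longrightarrow>
   psi G (Suc (Suc m)) i (cn G (Suc m) j \<alpha> z) = cn G (Suc m) j \<alpha> (psi G (Suc m) i z)"
  unfolding psi_def by simp

lemma psi_conn_below:
  "z \<in> cell G (Suc m) \<Longrightarrow> 1 \<le> j \<Longrightarrow> j < i \<Longrightarrow> i \<le> m \<Longrightarrow>
   psi G (Suc (Suc m)) (Suc i) (cn G (Suc m) j \<alpha> z) = cn G (Suc m) j \<alpha> (psi G (Suc m) i z)"
  unfolding psi_def by simp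

lemma psi_conn_same:
  "z \<in> cell G (Suc m) \<Longrightarrow> 1 \<le> j \<Longrightarrow> j \<le> Suc m \<Longrightarrow>
   psi G (Suc (Suc m)) j (cn G (Suc m) j \<alpha> z) = dg G (Suc m) j z"
  unfolding psi_def by (cases \<alpha>) simp_all

lemma face_lt_composable:
  "composable G (Suc n) (Suc j) x y \<Longrightarrow> 1 \<le> k \<Longrightarrow> k \<le> j \<Longrightarrow>
   fc G n j Pos (fc G (Suc n) k \<alpha> x) = fc G n j Neg (fc G (Suc n) k \<alpha> y)"
  using face_face[of x "Suc n" k "Suc j" \<alpha> Pos] face_face[of y "Suc n" k "Suc j" \<alpha> Neg] by auto

lemma psi_as_comp_list:
  "x \<in> cell G (Suc n) \<Longrightarrow> 1 \<le> i \<Longrightarrow> i \<le> n \<Longrightarrow>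
   psi G (Suc n) i x = comp_list G (Suc n) (Suc i)
     [cn G n i Pos (fc G (Suc n) (Suc i) Neg x), x, cn G n i Neg (fc G (Suc n) (Suc i) Pos x)]"
  unfolding psi_def by simp

text \<open>Both sides of each of the next four identities are composites of one grid: psi_i is a
  column in direction i+1, and the interchange law composes two columns cellwise.\<close>

lemma psi_comp_below:
  assumes c: "composable G (Suc (Suc m)) j x y" and ij: "j < i" "i \<le> Suc m"
  shows "psi G (Suc (Suc m)) i (cp G (Suc (Suc m)) j x y) =
    cp G (Suc (Suc m)) j (psi G (Suc (Suc m)) i x) (psi G (Suc (Suc m)) i y)"
proof -
  let ?N = "Suc (Suc m)"
  let ?col = "\<lambda>z. [cn G (Suc m) i Pos (fc G ?N (Suc i) Neg z), z, cn G (Suc m) i Neg (fc G ?N (Suc i) Pos z)]"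
  have cells: "x \<in> cell G ?N" "y \<in> cell G ?N" "cp G ?N j x y \<in> cell G ?N" "1 \<le> i"
    using c ij by auto
  have "psi G ?N i (cp G ?N j x y) = comp_list G ?N (Suc i) (?col (cp G ?N j x y))"
    using cells ij by (simp only: psi_as_comp_list)
  also have "?col (cp G ?N j x y) = map2 (cp G ?N j) (?col x) (?col y)"
    using c ij by simp
  also have "comp_list G ?N (Suc i) \<dots> =
      cp G ?N j (comp_list G ?N (Suc i) (?col x)) (comp_list G ?N (Suc i) (?col y))"
    by (rule comp_list_interchange[symmetric]) (use c ij in auto)
  also have "\<dots> = cp G ?N j (psi G ?N i x) (psi G ?N i y)"
    using cells ij by (simp only: psi_as_comp_list)
  finally show ?thesis .
qed

lemma psi_comp_above:
  assumes c: "composable G (Suc (Suc m)) (Suc j) x y" and ij: "1 \<le> i" "i < j"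
  shows "psi G (Suc (Suc m)) i (cp G (Suc (Suc m)) (Suc j) x y) =
    cp G (Suc (Suc m)) (Suc j) (psi G (Suc (Suc m)) i x) (psi G (Suc (Suc m)) i y)"
proof -
  let ?N = "Suc (Suc m)"
  let ?col = "\<lambda>z. [cn G (Suc m) i Pos (fc G ?N (Suc i) Neg z), z, cn G (Suc m) i Neg (fc G ?N (Suc i) Pos z)]"
  note faces = face_lt_composable[OF c]
  have cells: "x \<in> cell G ?N" "y \<in> cell G ?N" "cp G ?N (Suc j) x y \<in> cell G ?N" "i \<le> Suc m"
    using c ij by auto
  have "psi G ?N i (cp G ?N (Suc j) x y) = comp_list G ?N (Suc i) (?col (cp G ?N (Suc j) x y))"
    using cells ij by (simp only: psi_as_comp_list)
  also have "?col (cp G ?N (Suc j) x y) = map2 (cp G ?N (Suc j)) (?col x) (?col y)"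
    using c ij faces by simp
  also have "comp_list G ?N (Suc i) \<dots> =
      cp G ?N (Suc j) (comp_list G ?N (Suc i) (?col x)) (comp_list G ?N (Suc i) (?col y))"
    by (rule comp_list_interchange[symmetric]) (use c ij faces in auto)
  also have "\<dots> = cp G ?N (Suc j) (psi G ?N i x) (psi G ?N i y)"
    using cells ij by (simp only: psi_as_comp_list)
  finally show ?thesis .
qed

lemma psi_comp_same:
  assumes c: "composable G (Suc (Suc m)) i x y" and i: "i \<le> Suc m"
  shows "psi G (Suc (Suc m)) i (cp G (Suc (Suc m)) i x y) =
    cp G (Suc (Suc m)) i
      (cp G (Suc (Suc m)) (Suc i) (psi G (Suc (Suc m)) i x) (dg G (Suc m) i (fc G (Suc (Suc m)) (Suc i) Pos y)))
      (cp G (Suc (Suc m)) (Suc i) (dg G (Suc m) i (fc G (Suc (Suc m)) (Suc i) Neg x)) (psi G (Suc (Suc m)) i y))"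
proof -
  let ?N = "Suc (Suc m)"
  let ?xc = "fc G ?N (Suc i) Neg x" and ?xd = "fc G ?N (Suc i) Pos x"
    and ?yc = "fc G ?N (Suc i) Neg y" and ?yd = "fc G ?N (Suc i) Pos y"
  let ?left = "[cn G (Suc m) i Pos ?xc, dg G (Suc m) (Suc i) ?xc, x, cn G (Suc m) i Neg ?xd, dg G (Suc m) i ?yd]"
    and ?right = "[dg G (Suc m) i ?xc, cn G (Suc m) i Pos ?yc, y, dg G (Suc m) (Suc i) ?yd, cn G (Suc m) i Neg ?yd]"
  have left: "comp_list G ?N (Suc i) ?left = cp G ?N (Suc i) (psi G ?N i x) (dg G (Suc m) i ?yd)"
    and right: "comp_list G ?N (Suc i) ?right = cp G ?N (Suc i) (dg G (Suc m) i ?xc) (psi G ?N i y)"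
    using c i by (simp_all add: psi_as_comp_list)
  have "psi G ?N i (cp G ?N i x y) = comp_list G ?N (Suc i) (map2 (cp G ?N i) ?left ?right)"
    using c i by (simp add: psi_as_comp_list conn_comp_pos conn_comp_neg)
  also have "\<dots> = cp G ?N i (comp_list G ?N (Suc i) ?left) (comp_list G ?N (Suc i) ?right)"
    by (rule comp_list_interchange[symmetric]) (use c i in auto)
  finally show ?thesis unfolding left right .
qed

lemma psi_comp_Suc:
  assumes c: "composable G (Suc (Suc m)) (Suc i) x y" and i: "1 \<le> i" "i \<le> Suc m"
  shows "psi G (Suc (Suc m)) i (cp G (Suc (Suc m)) (Suc i) x y) =
    cp G (Suc (Suc m)) i
      (cp G (Suc (Suc m)) (Suc i) (dg G (Suc m) i (fc G (Suc (Suc m)) i Neg x)) (psi G (Suc (Suc m)) i y))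
      (cp G (Suc (Suc m)) (Suc i) (psi G (Suc (Suc m)) i x) (dg G (Suc m) i (fc G (Suc (Suc m)) i Pos y)))"
proof -
  let ?N = "Suc (Suc m)"
  let ?xa = "fc G ?N i Neg x" and ?yb = "fc G ?N i Pos y"
    and ?xc = "fc G ?N (Suc i) Neg x" and ?xd = "fc G ?N (Suc i) Pos x" and ?yd = "fc G ?N (Suc i) Pos y"
  let ?left = "[dg G (Suc m) i (dg G m i (fc G (Suc m) i Neg ?xa)), dg G (Suc m) i ?xa,
        cn G (Suc m) i Pos ?xd, y, cn G (Suc m) i Neg ?yd]"
    and ?right = "[cn G (Suc m) i Pos ?xc, x, cn G (Suc m) i Neg ?xd, dg G (Suc m) i ?yb,
        dg G (Suc m) i (dg G m i (fc G (Suc m) i Pos ?yb))]"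
  note faces = face_lt_composable[OF c]
  have left: "comp_list G ?N (Suc i) ?left = cp G ?N (Suc i) (dg G (Suc m) i ?xa) (psi G ?N i y)"
    and right: "comp_list G ?N (Suc i) ?right = cp G ?N (Suc i) (psi G ?N i x) (dg G (Suc m) i ?yb)"
    using c i faces by (simp_all add: psi_as_comp_list)
  have "psi G ?N i (cp G ?N (Suc i) x y) = comp_list G ?N (Suc i) (map2 (cp G ?N i) ?left ?right)"
    using c i faces by (simp add: psi_as_comp_list)
  also have "\<dots> = cp G ?N i (comp_list G ?N (Suc i) ?left) (comp_list G ?N (Suc i) ?right)"
    by (rule comp_list_interchange[symmetric]) (use c i faces in auto)
  finally show ?thesis unfolding left right .
qed


lemma conn_Neg_conn_Pos:
  assumes c: "c \<in> cell G (Suc k)" and i: "1 \<le> i" "i \<le> Suc k"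
  shows "cn G (Suc (Suc k)) i Neg (cn G (Suc k) i Pos c) =
    cp G (Suc (Suc (Suc k))) (Suc (Suc i)) (dg G (Suc (Suc k)) (Suc i) (cn G (Suc k) i Pos c))
      (cn G (Suc (Suc k)) (Suc i) Pos (cn G (Suc k) i Neg c))"
proof -
  let ?cp = "cp G (Suc (Suc (Suc k)))" and ?cn = "cn G (Suc (Suc k))" and ?dg = "dg G (Suc (Suc k))"
  define a where "a = cn G (Suc k) i Pos c"
  define b where "b = cn G (Suc k) i Neg c"
  have ab: "a \<in> cell G (Suc (Suc k))" "b \<in> cell G (Suc (Suc k))" unfolding a_def b_def using c i by auto
  have "?cn i Neg a = ?cp (Suc (Suc i))
      (?cp (Suc i) (?dg (Suc i) a) (?cn i Neg a)) (?cp (Suc i) (?cn (Suc i) Pos b) (?cn (Suc i) Neg b))"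
    unfolding a_def b_def using c i by simp
  also have "\<dots> = ?cp (Suc i)
      (?cp (Suc (Suc i)) (?dg (Suc i) a) (?cn (Suc i) Pos b)) (?cp (Suc (Suc i)) (?cn i Neg a) (?cn (Suc i) Neg b))"
    by (rule interchange) (use c i in \<open>simp_all add: a_def b_def\<close>)
  also have "?cp (Suc (Suc i)) (?cn i Neg a) (?cn (Suc i) Neg b) = ?dg i (dg G (Suc k) i c)"
  proof -
    have "?cn i Neg (cp G (Suc (Suc k)) (Suc i) a b) = ?cp (Suc (Suc i)) (?cn i Neg a) (?cn i Neg b)"
      by (rule conn_comp_lt) (use c i ab in \<open>simp_all add: a_def b_def\<close>)
    moreover have "?cn i Neg b = ?cn (Suc i) Neg b"
      unfolding b_def using c i by simp
    moreover have "cp G (Suc (Suc k)) (Suc i) a b = dg G (Suc k) i c"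
      unfolding a_def b_def using c i by simp
    ultimately show ?thesis using c i by simp
  qed
  finally show ?thesis using c i by (simp add: a_def b_def)
qed

text \<open>Here v is the right half of psi_i w = Gamma+_i (face-_(i+1) w) \<circ>_(i+1) v.\<close>

lemma conn_Neg_right_half_psi:
  assumes w: "w \<in> cell G (Suc (Suc k))" and i: "1 \<le> i" "i \<le> Suc k"
  defines "v \<equiv> cp G (Suc (Suc k)) (Suc i) w (cn G (Suc k) i Neg (fc G (Suc (Suc k)) (Suc i) Pos w))"
  shows "cp G (Suc (Suc (Suc k))) (Suc (Suc i))
      (cp G (Suc (Suc (Suc k))) (Suc i) (cn G (Suc (Suc k)) (Suc i) Pos w) (cn G (Suc (Suc k)) i Neg w))
      (cn G (Suc (Suc k)) (Suc i) Neg v) = cn G (Suc (Suc k)) i Neg v"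
proof -
  let ?cp = "cp G (Suc (Suc (Suc k)))" and ?cn = "cn G (Suc (Suc k))" and ?dg = "dg G (Suc (Suc k))"
  define d where "d = fc G (Suc (Suc k)) (Suc i) Pos w"
  define e where "e = cn G (Suc k) i Neg d"
  define X where "X = ?cp (Suc i) (?cn (Suc i) Pos w) (?cn i Neg w)"
  have cells: "d \<in> cell G (Suc k)" "e \<in> cell G (Suc (Suc k))" "v \<in> cell G (Suc (Suc k))"
    "X \<in> cell G (Suc (Suc (Suc k)))"
    using w i by (auto simp: d_def e_def v_def X_def)
  have v: "v = cp G (Suc (Suc k)) (Suc i) w e" unfolding v_def e_def d_def ..
  have conn_v: "?cn (Suc i) Neg v = ?cp (Suc (Suc i))
      (?cp (Suc i) (?cn (Suc i) Neg w) (?dg (Suc (Suc i)) e)) (?cp (Suc i) (?dg (Suc i) e) (?cn (Suc i) Neg e))"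
    unfolding v by (rule conn_comp_neg) (use cells w i in \<open>simp add: e_def d_def\<close>)
  have assoc: "?cp (Suc (Suc i)) X (?cn (Suc i) Neg v) = ?cp (Suc (Suc i))
      (?cp (Suc (Suc i)) X (?cp (Suc i) (?cn (Suc i) Neg w) (?dg (Suc (Suc i)) e)))
      (?cp (Suc i) (?dg (Suc i) e) (?cn (Suc i) Neg e))"
    unfolding conn_v
    by (rule comp_assoc[symmetric]) (use w i cells in \<open>simp_all add: X_def e_def d_def del: comp_assoc\<close>)
  have swap1: "?cp (Suc (Suc i)) X (?cp (Suc i) (?cn (Suc i) Neg w) (?dg (Suc (Suc i)) e)) =
      ?cp (Suc i) (?cp (Suc (Suc i)) (?cn (Suc i) Pos w) (?cn (Suc i) Neg w))
        (?cp (Suc (Suc i)) (?cn i Neg w) (?dg (Suc (Suc i)) e))"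
    unfolding X_def by (rule interchange) (use cells w i in \<open>simp_all add: e_def d_def\<close>)
  have swap2: "?cp (Suc (Suc i)) (?cp (Suc i) (?dg (Suc i) w) (?cn i Neg w))
      (?cp (Suc i) (?dg (Suc i) e) (?cn (Suc i) Neg e)) =
      ?cp (Suc i) (?cp (Suc (Suc i)) (?dg (Suc i) w) (?dg (Suc i) e))
        (?cp (Suc (Suc i)) (?cn i Neg w) (?cn (Suc i) Neg e))"
    by (rule interchange) (use cells w i in \<open>simp_all add: e_def d_def\<close>)
  have conn_inv: "?cp (Suc (Suc i)) (?cn (Suc i) Pos w) (?cn (Suc i) Neg w) = ?dg (Suc i) w"
    using w i by simp
  have right_id: "?cp (Suc (Suc i)) (?cn i Neg w) (?dg (Suc (Suc i)) e) = ?cn i Neg w"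
    using w i cells by (simp add: e_def d_def)
  have deg_v: "?cp (Suc (Suc i)) (?dg (Suc i) w) (?dg (Suc i) e) = ?dg (Suc i) v"
    unfolding v by (rule deg_comp_le[symmetric]) (use w i cells in \<open>simp_all add: e_def d_def\<close>)
  have conn_e: "?cn (Suc i) Neg e = ?cn i Neg e" using cells i by (simp add: e_def)
  have conn_Neg_v: "?cp (Suc (Suc i)) (?cn i Neg w) (?cn (Suc i) Neg e) = ?cn i Neg v"
    unfolding conn_e v by (rule conn_comp_lt[symmetric]) (use w i cells in \<open>simp_all add: e_def d_def\<close>)
  have left_id: "?cp (Suc i) (?dg (Suc i) v) (?cn i Neg v) = ?cn i Neg v"
    using cells i by simp
  show ?thesis
    unfolding X_def[symmetric] assoc swap1 conn_inv right_id swap2 deg_v conn_Neg_v left_id ..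
qed

lemma deg_conn_Pos_split:
  assumes c: "c \<in> cell G (Suc k)" and i: "1 \<le> i" "i \<le> Suc k"
  shows "dg G (Suc (Suc k)) i (cn G (Suc k) i Pos c) =
    cp G (Suc (Suc (Suc k))) (Suc i) (cn G (Suc (Suc k)) (Suc i) Pos (cn G (Suc k) i Pos c))
      (cn G (Suc (Suc k)) i Neg (cn G (Suc k) i Pos c))"
proof -
  let ?cp = "cp G (Suc (Suc (Suc k)))" and ?cn = "cn G (Suc (Suc k))" and ?dg = "dg G (Suc (Suc k))"
  define a where "a = cn G (Suc k) i Pos c"
  define b where "b = cn G (Suc k) i Neg c"
  have "?dg i a = ?cn (Suc i) Pos (dg G (Suc k) i c)" using c i by (simp add: a_def)
  also have "\<dots> = ?cn (Suc i) Pos (cp G (Suc (Suc k)) (Suc i) a b)" using c i by (simp add: a_def b_def)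
  also have "\<dots> = ?cp (Suc (Suc i)) (?cp (Suc i) (?cn (Suc i) Pos a) (?dg (Suc i) a))
      (?cp (Suc i) (?dg (Suc (Suc i)) a) (?cn (Suc i) Pos b))"
    by (rule conn_comp_pos) (use c i in \<open>simp del: comp_left_id_Suc comp_right_id_Suc add: a_def b_def\<close>)
  also have "\<dots> = ?cp (Suc i) (?cp (Suc (Suc i)) (?cn (Suc i) Pos a) (?dg (Suc (Suc i)) a))
      (?cp (Suc (Suc i)) (?dg (Suc i) a) (?cn (Suc i) Pos b))"
    by (rule interchange) (use c i in \<open>simp_all del: comp_left_id_Suc comp_right_id_Suc add: a_def b_def\<close>)
  also have "?cp (Suc (Suc i)) (?dg (Suc i) a) (?cn (Suc i) Pos b) = ?cn i Neg a"
    unfolding a_def b_def using conn_Neg_conn_Pos[OF c i] by simp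
  also have "?cp (Suc (Suc i)) (?cn (Suc i) Pos a) (?dg (Suc (Suc i)) a) = ?cn (Suc i) Pos a"
    using c i by (simp add: a_def)
  finally show ?thesis unfolding a_def .
qed

lemma deg_conn_Pos_comp:
  assumes c: "c \<in> cell G (Suc k)" and v: "v \<in> cell G (Suc (Suc k))" and i: "1 \<le> i" "i \<le> Suc k"
    and cv: "fc G (Suc (Suc k)) (Suc i) Neg v = c"
  defines "a \<equiv> cn G (Suc k) i Pos c"
  shows "cp G (Suc (Suc (Suc k))) (Suc (Suc i)) (dg G (Suc (Suc k)) i a)
      (cp G (Suc (Suc (Suc k))) (Suc i)
        (cp G (Suc (Suc (Suc k))) (Suc (Suc i)) (cn G (Suc (Suc k)) (Suc i) Neg a) (dg G (Suc (Suc k)) (Suc i) v))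
        (cn G (Suc (Suc k)) i Neg v)) =
    cn G (Suc (Suc k)) i Neg (cp G (Suc (Suc k)) (Suc i) a v)"
proof -
  let ?cp = "cp G (Suc (Suc (Suc k)))" and ?cn = "cn G (Suc (Suc k))" and ?dg = "dg G (Suc (Suc k))"
  let ?u = "cp G (Suc (Suc k)) (Suc i) a v"
  have a: "a \<in> cell G (Suc (Suc k))" "fc G (Suc (Suc k)) (Suc i) Pos a = c"
    using c i by (simp_all add: a_def)
  have left_id_v: "cp G (Suc (Suc k)) (Suc i) (dg G (Suc k) (Suc i) c) v = v"
    using v i cv by simp
  have "?cp (Suc (Suc i)) (?dg i a)
      (?cp (Suc i) (?cp (Suc (Suc i)) (?cn (Suc i) Neg a) (?dg (Suc i) v)) (?cn i Neg v)) =
    ?cp (Suc (Suc i)) (?cp (Suc i) (?cn (Suc i) Pos a) (?cn i Neg a))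
      (?cp (Suc i) (?cp (Suc (Suc i)) (?cn (Suc i) Neg a) (?dg (Suc i) v)) (?cn i Neg v))"
    unfolding a_def using deg_conn_Pos_split[OF c i] by simp
  also have "\<dots> = ?cp (Suc i) (?cp (Suc (Suc i)) (?cn (Suc i) Pos a) (?cp (Suc (Suc i)) (?cn (Suc i) Neg a) (?dg (Suc i) v)))
      (?cp (Suc (Suc i)) (?cn i Neg a) (?cn i Neg v))"
    by (rule interchange)
      (use a v cv i left_id_v in \<open>simp_all del: comp_left_id_Suc comp_right_id_Suc\<close>)
  also have "?cp (Suc (Suc i)) (?cn (Suc i) Pos a) (?cp (Suc (Suc i)) (?cn (Suc i) Neg a) (?dg (Suc i) v)) =
      ?dg (Suc i) ?u"
  proof -
    have "?cp (Suc (Suc i)) (?cn (Suc i) Pos a) (?cp (Suc (Suc i)) (?cn (Suc i) Neg a) (?dg (Suc i) v)) =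
        ?cp (Suc (Suc i)) (?cp (Suc (Suc i)) (?cn (Suc i) Pos a) (?cn (Suc i) Neg a)) (?dg (Suc i) v)"
      by (rule comp_assoc[symmetric])
        (use a v cv i in \<open>simp_all del: comp_left_id_Suc comp_right_id_Suc comp_assoc\<close>)
    also have "\<dots> = ?cp (Suc (Suc i)) (?dg (Suc i) a) (?dg (Suc i) v)" using a i by simp
    also have "\<dots> = ?dg (Suc i) ?u"
      by (rule deg_comp_le[symmetric]) (use a v cv i in \<open>simp_all del: comp_left_id_Suc comp_right_id_Suc\<close>)
    finally show ?thesis .
  qed
  also have "?cp (Suc (Suc i)) (?cn i Neg a) (?cn i Neg v) = ?cn i Neg ?u"
    by (rule conn_comp_lt[symmetric]) (use a v cv i in \<open>simp_all del: comp_left_id_Suc comp_right_id_Suc\<close>)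
  also have "?cp (Suc i) (?dg (Suc i) ?u) (?cn i Neg ?u) = ?cn i Neg ?u"
    using a v cv i by simp
  finally show ?thesis .
qed

lemma psi_conn_Pos_comp_conn_Neg:
  assumes w: "w \<in> cell G (Suc (Suc k))" and i: "1 \<le> i" "i \<le> Suc k"
  defines "a \<equiv> cn G (Suc k) i Pos (fc G (Suc (Suc k)) (Suc i) Neg w)"
    and "v \<equiv> cp G (Suc (Suc k)) (Suc i) w (cn G (Suc k) i Neg (fc G (Suc (Suc k)) (Suc i) Pos w))"
  shows "cp G (Suc (Suc (Suc k))) (Suc (Suc i)) (psi G (Suc (Suc (Suc k))) i (cn G (Suc (Suc k)) (Suc i) Pos w))
      (cn G (Suc (Suc k)) (Suc i) Neg (psi G (Suc (Suc k)) i w)) =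
    cp G (Suc (Suc (Suc k))) (Suc i)
      (cp G (Suc (Suc (Suc k))) (Suc (Suc i)) (cn G (Suc (Suc k)) (Suc i) Neg a) (dg G (Suc (Suc k)) (Suc i) v))
      (cn G (Suc (Suc k)) i Neg v)"
proof -
  let ?cp = "cp G (Suc (Suc (Suc k)))" and ?cn = "cn G (Suc (Suc k))" and ?dg = "dg G (Suc (Suc k))"
  define c where "c = fc G (Suc (Suc k)) (Suc i) Neg w"
  define d where "d = fc G (Suc (Suc k)) (Suc i) Pos w"
  define X where "X = psi G (Suc (Suc (Suc k))) i (?cn (Suc i) Pos w)"
  define Y where "Y = ?cp (Suc i) (?cn (Suc i) Pos w) (?cn i Neg w)"
  note defs = c_def d_def a_def v_def X_def Y_def
  have cells: "c \<in> cell G (Suc k)" "d \<in> cell G (Suc k)" "a \<in> cell G (Suc (Suc k))"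
    "v \<in> cell G (Suc (Suc k))" "X \<in> cell G (Suc (Suc (Suc k)))" "Y \<in> cell G (Suc (Suc (Suc k)))"
    unfolding defs using w i by auto
  have u: "psi G (Suc (Suc k)) i w = cp G (Suc (Suc k)) (Suc i) a v"
    unfolding defs using w i by (simp add: psi_as_comp_list)
  have X: "X = ?cp (Suc i) (?dg (Suc (Suc i)) a) Y" unfolding defs using w i by (simp add: psi_as_comp_list)
  have conn_u: "?cn (Suc i) Neg (psi G (Suc (Suc k)) i w) = ?cp (Suc (Suc i))
      (?cp (Suc i) (?cn (Suc i) Neg a) (?dg (Suc (Suc i)) v)) (?cp (Suc i) (?dg (Suc i) v) (?cn (Suc i) Neg v))"
    unfolding u by (rule conn_comp_neg) (use cells w i in \<open>simp add: defs\<close>)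
  have side: "?cp (Suc i) (?cn (Suc i) Neg a) (?dg (Suc (Suc i)) v) \<in> cell G (Suc (Suc (Suc k)))"
    "?cp (Suc i) (?dg (Suc i) v) (?cn (Suc i) Neg v) \<in> cell G (Suc (Suc (Suc k)))"
    using cells w i by (simp_all del: comp_left_id_Suc comp_right_id_Suc add: defs)
  have "?cp (Suc (Suc i)) X (?cn (Suc i) Neg (psi G (Suc (Suc k)) i w)) = ?cp (Suc (Suc i))
      (?cp (Suc (Suc i)) X (?cp (Suc i) (?cn (Suc i) Neg a) (?dg (Suc (Suc i)) v)))
      (?cp (Suc i) (?dg (Suc i) v) (?cn (Suc i) Neg v))"
    unfolding conn_u by (rule comp_assoc[symmetric])
      (use w i cells side in \<open>simp_all del: comp_left_id_Suc comp_right_id_Suc comp_assoc add: X defs\<close>)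
  also have "?cp (Suc (Suc i)) X (?cp (Suc i) (?cn (Suc i) Neg a) (?dg (Suc (Suc i)) v)) =
      ?cp (Suc i) (?cn (Suc i) Neg a) Y"
  proof -
    have "?cp (Suc (Suc i)) (?cp (Suc i) (?dg (Suc (Suc i)) a) Y) (?cp (Suc i) (?cn (Suc i) Neg a) (?dg (Suc (Suc i)) v)) =
        ?cp (Suc i) (?cp (Suc (Suc i)) (?dg (Suc (Suc i)) a) (?cn (Suc i) Neg a)) (?cp (Suc (Suc i)) Y (?dg (Suc (Suc i)) v))"
      by (rule interchange) (use cells(1,2) w i in \<open>simp_all add: a_def c_def Y_def v_def d_def\<close>)
    moreover have "?cp (Suc (Suc i)) (?dg (Suc (Suc i)) a) (?cn (Suc i) Neg a) = ?cn (Suc i) Neg a"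
      using cells i by simp
    moreover have "?cp (Suc (Suc i)) Y (?dg (Suc (Suc i)) v) = Y"
      using w i cells(1,2) by (simp add: Y_def v_def d_def)
    ultimately show ?thesis unfolding X by simp
  qed
  also have "?cp (Suc (Suc i)) (?cp (Suc i) (?cn (Suc i) Neg a) Y) (?cp (Suc i) (?dg (Suc i) v) (?cn (Suc i) Neg v)) =
      ?cp (Suc i) (?cp (Suc (Suc i)) (?cn (Suc i) Neg a) (?dg (Suc i) v)) (?cp (Suc (Suc i)) Y (?cn (Suc i) Neg v))"
    by (rule interchange) (use cells(1,2) w i in \<open>simp_all add: a_def c_def Y_def v_def d_def\<close>)
  also have "?cp (Suc (Suc i)) Y (?cn (Suc i) Neg v) = ?cn i Neg v"
    unfolding Y_def v_def using conn_Neg_right_half_psi[OF w i] .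
  finally show ?thesis unfolding X_def .
qed

lemma psi_Suc_psi_conn_Pos:
  assumes w: "w \<in> cell G (Suc (Suc k))" and i: "1 \<le> i" "i \<le> Suc k"
  shows "psi G (Suc (Suc (Suc k))) (Suc i) (psi G (Suc (Suc (Suc k))) i (cn G (Suc (Suc k)) (Suc i) Pos w)) =
    cn G (Suc (Suc k)) i Neg (psi G (Suc (Suc k)) i w)"
proof -
  let ?cp = "cp G (Suc (Suc (Suc k)))" and ?cn = "cn G (Suc (Suc k))" and ?dg = "dg G (Suc (Suc k))"
  define c where "c = fc G (Suc (Suc k)) (Suc i) Neg w"
  define v where "v = cp G (Suc (Suc k)) (Suc i) w (cn G (Suc k) i Neg (fc G (Suc (Suc k)) (Suc i) Pos w))"
  define X where "X = psi G (Suc (Suc (Suc k))) i (?cn (Suc i) Pos w)"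
  have cells: "c \<in> cell G (Suc k)" "v \<in> cell G (Suc (Suc k))" "X \<in> cell G (Suc (Suc (Suc k)))"
    unfolding c_def v_def X_def using w i by auto
  have u: "psi G (Suc (Suc k)) i w = cp G (Suc (Suc k)) (Suc i) (cn G (Suc k) i Pos c) v"
    unfolding c_def v_def using w i by (simp add: psi_as_comp_list)
  have "fc G (Suc (Suc (Suc k))) (Suc (Suc i)) Neg X = dg G (Suc k) i c"
    and "fc G (Suc (Suc (Suc k))) (Suc (Suc i)) Pos X = psi G (Suc (Suc k)) i w"
    and "?cn (Suc i) Pos (dg G (Suc k) i c) = ?dg i (cn G (Suc k) i Pos c)"
    unfolding X_def c_def using w i cells by simp_all
  then have "psi G (Suc (Suc (Suc k))) (Suc i) X =
      ?cp (Suc (Suc i)) (?dg i (cn G (Suc k) i Pos c)) (?cp (Suc (Suc i)) X (?cn (Suc i) Neg (psi G (Suc (Suc k)) i w)))"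
    using psi_as_comp_list[of X "Suc (Suc k)" "Suc i"] cells i by (simp del: comp_assoc)
  also have "?cp (Suc (Suc i)) X (?cn (Suc i) Neg (psi G (Suc (Suc k)) i w)) =
      ?cp (Suc i) (?cp (Suc (Suc i)) (?cn (Suc i) Neg (cn G (Suc k) i Pos c)) (?dg (Suc i) v)) (?cn i Neg v)"
    unfolding X_def c_def v_def by (rule psi_conn_Pos_comp_conn_Neg[OF w i])
  also have "?cp (Suc (Suc i)) (?dg i (cn G (Suc k) i Pos c))
      (?cp (Suc i) (?cp (Suc (Suc i)) (?cn (Suc i) Neg (cn G (Suc k) i Pos c)) (?dg (Suc i) v)) (?cn i Neg v)) =
      ?cn i Neg (psi G (Suc (Suc k)) i w)"
    unfolding u by (rule deg_conn_Pos_comp) (use cells w i in \<open>simp_all add: c_def v_def\<close>)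
  finally show ?thesis unfolding X_def .
qed

lemma psi_reverse:
  "x \<in> cell G (Suc n) \<Longrightarrow> 1 \<le> i \<Longrightarrow> i \<le> n \<Longrightarrow> psi (reverse G) (Suc n) i x = psi G (Suc n) i x"
  unfolding psi_def by simp

lemma psi_Suc_psi_conn_Neg:
  assumes w: "w \<in> cell G (Suc (Suc k))" and i: "1 \<le> i" "i \<le> Suc k"
  shows "psi G (Suc (Suc (Suc k))) (Suc i) (psi G (Suc (Suc (Suc k))) i (cn G (Suc (Suc k)) (Suc i) Neg w)) =
    cn G (Suc (Suc k)) i Pos (psi G (Suc (Suc k)) i w)"
proof -
  interpret reversed: cubical_omega_cat_conn "reverse G"
    by (rule cubical_omega_cat_conn_reverse)
  show ?thesis
    using reversed.psi_Suc_psi_conn_Pos[OF _ i] w i by (simp add: psi_reverse)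
qed

lemma psi_Suc_psi_conn:
  "w \<in> cell G (Suc (Suc k)) \<Longrightarrow> 1 \<le> i \<Longrightarrow> i \<le> Suc k \<Longrightarrow>
   psi G (Suc (Suc (Suc k))) (Suc i) (psi G (Suc (Suc (Suc k))) i (cn G (Suc (Suc k)) (Suc i) \<alpha> w)) =
     cn G (Suc (Suc k)) i (opp \<alpha>) (psi G (Suc (Suc k)) i w)"
  by (cases \<alpha>) (simp_all add: psi_Suc_psi_conn_Pos psi_Suc_psi_conn_Neg)

end

fun psi_from :: "'a cubcat \<Rightarrow> nat \<Rightarrow> nat \<Rightarrow> nat \<Rightarrow> 'a \<Rightarrow> 'a" where
  "psi_from G n k 0 x = x"
| "psi_from G n k (Suc l) x = psi_from G n (Suc k) l (psi G n k x)"

text \<open>Phi_from G n r k x = Psi_1 (... (Psi_(r-1) (psi_(r-1) (... (psi_k x))))) is the stage of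
  the fold Phi_n = Phi_from G n n 1 just before psi_k is applied.\<close>

definition Phi_from :: "'a cubcat \<Rightarrow> nat \<Rightarrow> nat \<Rightarrow> nat \<Rightarrow> 'a \<Rightarrow> 'a" where
  "Phi_from G n r k x = Phi_upto G n (r - 1) (psi_from G n k (r - k) x)"

lemma psi_from_Suc_right: "psi_from G n k (Suc l) x = psi G n (k + l) (psi_from G n k l x)"
  by (induction l arbitrary: k x) auto

lemma psi_upto_eq_psi_from: "psi_upto G n l x = psi_from G n 1 l x"
  by (induction l) (simp_all add: psi_from_Suc_right del: psi_from.simps(2))

lemma Phi_from_step: "k < r \<Longrightarrow> Phi_from G n r k x = Phi_from G n r (Suc k) (psi G n k x)"
  by (simp add: Phi_from_def Suc_diff_Suc[symmetric])

lemma Phi_from_block: "2 \<le> r \<Longrightarrow> Phi_from G n r r x = Phi_from G n (r - 1) 1 x"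
proof -
  assume "2 \<le> r"
  then obtain s where "r = Suc (Suc s)" by (cases r; cases "r - 1") auto
  then show ?thesis by (simp add: Phi_from_def Psi_def psi_upto_eq_psi_from)
qed

lemma Phi_eq_Phi_from: "1 \<le> n \<Longrightarrow> Phi G n x = Phi_from G n n 1 x"
  by (cases n) (simp_all add: Phi_from_def Phi_def Psi_def psi_upto_eq_psi_from)

lemma stage_induct [consumes 2, case_names base block step]:
  assumes "1 \<le> k" "k \<le> r"
    and base: "P 1 1"
    and block: "\<And>r. 2 \<le> r \<Longrightarrow> P (r - 1) 1 \<Longrightarrow> P r r"
    and step: "\<And>r k. 1 \<le> k \<Longrightarrow> k < r \<Longrightarrow> P r (Suc k) \<Longrightarrow> P r k"
  shows "P r k"
  using assms(1,2)
proof (induction r arbitrary: k)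
  case (Suc r)
  have "P (Suc r) (Suc r)"
    using base block[of "Suc r"] Suc.IH[of 1] by (cases r) simp_all
  from Suc.prems(2) this show ?case
  proof (induction k rule: inc_induct)
    case (step n)
    then show ?case using assms(5)[of n "Suc r"] Suc.prems(1) by simp
  qed
qed simp

context cubical_omega_cat_conn
begin

definition folds_deg1 :: "nat \<Rightarrow> nat \<Rightarrow> nat \<Rightarrow> 'a \<Rightarrow> bool" where
  "folds_deg1 m r k x \<longleftrightarrow> (\<exists>z\<in>cell G m. Phi_from G (Suc m) r k x = dg G m 1 z)"

lemma folds_deg1_step: "k < r \<Longrightarrow> folds_deg1 m r k x \<longleftrightarrow> folds_deg1 m r (Suc k) (psi G (Suc m) k x)"
  unfolding folds_deg1_def using Phi_from_step[of k r G "Suc m" x] by simp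

lemma folds_deg1_block: "2 \<le> r \<Longrightarrow> folds_deg1 m r r x \<longleftrightarrow> folds_deg1 m (r - 1) 1 x"
  unfolding folds_deg1_def using Phi_from_block[of r G "Suc m" x] by simp

lemma psi_deg_is_deg:
  assumes v: "v \<in> cell G (Suc m)" and k: "1 \<le> k" "k \<le> Suc m" and j: "1 \<le> j" "j \<le> Suc (Suc m)"
  shows "\<exists>j' v'. v' \<in> cell G (Suc m) \<and> 1 \<le> j' \<and> j' \<le> j \<and> j' \<noteq> Suc k \<and>
    psi G (Suc (Suc m)) k (dg G (Suc m) j v) = dg G (Suc m) j' v'"
proof -
  consider "j < k" | "j = k" | "j = Suc k" | "Suc k < j" by linarith
  then show ?thesis
  proof cases
    case 1
    then obtain i where "k = Suc i" "j \<le> i" by (cases k) auto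
    then show ?thesis using psi_deg_below[of v m j i] v k j
      by (intro exI[of _ j] exI[of _ "psi G (Suc m) i v"]) simp
  next
    case 2
    then show ?thesis using v k j by (intro exI[of _ j] exI[of _ v]) simp
  next
    case 3
    then show ?thesis using v k j by (intro exI[of _ k] exI[of _ v]) simp
  next
    case 4
    then show ?thesis using psi_deg_above[of v m k j] v k j
      by (intro exI[of _ j] exI[of _ "psi G (Suc m) k v"]) simp
  qed
qed

lemma folds_deg1_deg:
  assumes "1 \<le> k" "k \<le> r"
  shows "r \<le> Suc m \<Longrightarrow> v \<in> cell G m \<Longrightarrow> 1 \<le> j \<Longrightarrow> j \<le> r \<Longrightarrow> j < r \<or> k < r \<or> j = 1 \<Longrightarrow>
    folds_deg1 m r k (dg G m j v)"
  using assms
proof (induction r k arbitrary: j v rule: stage_induct)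
  case base
  then show ?case by (auto simp: folds_deg1_def Phi_from_def)
next
  case (block r)
  then have "j \<le> r - 1" "j < r - 1 \<or> 1 < r - 1 \<or> j = 1" by auto
  with block show ?case by (simp add: folds_deg1_block)
next
  case (step r k)
  obtain m' where m: "m = Suc m'" using step by (cases m) auto
  obtain j' v' where v': "v' \<in> cell G m" "1 \<le> j'" "j' \<le> j" "j' \<noteq> Suc k"
    and psi: "psi G (Suc m) k (dg G m j v) = dg G m j' v'"
    using psi_deg_is_deg[of v m' k j] step m by auto
  have "folds_deg1 m r (Suc k) (dg G m j' v')"
    using step.IH[OF step.prems(1) v'(1,2)] v'(3,4) step by linarith
  then show ?case using folds_deg1_step[of k r m] step psi by simp
qed

lemma comp_deg1:
  assumes y: "y1 \<in> cell G m" "y2 \<in> cell G m"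
    and c: "composable G (Suc m) j (dg G m 1 y1) (dg G m 1 y2)"
  shows "\<exists>z\<in>cell G m. cp G (Suc m) j (dg G m 1 y1) (dg G m 1 y2) = dg G m 1 z"
proof (cases "j = 1")
  case True
  then have "y1 = y2" using c y by simp
  then show ?thesis using True y by (intro bexI[of _ y1]) simp_all
next
  case False
  then obtain j' where j: "j = Suc j'" "1 \<le> j'" using c by (cases j) auto
  obtain m' where m: "m = Suc m'" using c j y by (cases m) auto
  have "j' \<le> m" and "fc G (Suc m) j Pos (dg G m 1 y1) = fc G (Suc m) j Neg (dg G m 1 y2)"
    using c j by auto
  then have "dg G m' 1 (fc G m j' Pos y1) = dg G m' 1 (fc G m j' Neg y2)"
    using y j m by simp
  then have "fc G (Suc m') 1 Neg (dg G m' 1 (fc G m j' Pos y1)) =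
      fc G (Suc m') 1 Neg (dg G m' 1 (fc G m j' Neg y2))"
    by simp
  then have cc: "composable G m j' y1 y2" using y j m c by simp
  have "dg G m 1 (cp G m j' y1 y2) = cp G (Suc m) (Suc j') (dg G m 1 y1) (dg G m 1 y2)"
    by (rule deg_comp_le[OF cc]) (use j in simp_all)
  then show ?thesis using cc j by (intro bexI[of _ "cp G m j' y1 y2"]) simp_all
qed

lemma psi_comp_in_closure:
  assumes c: "composable G (Suc (Suc m)) j x y" and k: "1 \<le> k" "k \<le> Suc m"
    and closed: "\<And>j a b. composable G (Suc (Suc m)) j a b \<Longrightarrow> a \<in> S \<Longrightarrow> b \<in> S \<Longrightarrow>
      cp G (Suc (Suc m)) j a b \<in> S"
    and psi: "psi G (Suc (Suc m)) k x \<in> S" "psi G (Suc (Suc m)) k y \<in> S"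
    and deg: "\<And>w. w \<in> cell G (Suc m) \<Longrightarrow> dg G (Suc m) k w \<in> S"
  shows "psi G (Suc (Suc m)) k (cp G (Suc (Suc m)) j x y) \<in> S"
proof -
  let ?N = "Suc (Suc m)"
  consider "j < k" | "j = k" | "j = Suc k" | "Suc k < j" by linarith
  then show ?thesis
  proof cases
    case 1
    then show ?thesis using psi_comp_below[OF c 1 k(2)] c k by (simp add: closed psi)
  next
    case 2
    then have ck: "composable G ?N k x y" using c by simp
    show ?thesis unfolding 2 psi_comp_same[OF ck k(2)]
      by (intro closed psi deg) (use ck k in simp_all)
  next
    case 3
    then have ck: "composable G ?N (Suc k) x y" using c by simp
    note faces = face_lt_composable[OF ck]
    show ?thesis unfolding 3 psi_comp_Suc[OF ck k]
      by (intro closed psi deg) (use ck k faces in simp_all)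
  next
    case 4
    then obtain j' where j: "j = Suc j'" "k < j'" by (cases j) auto
    then have cj: "composable G ?N (Suc j') x y" using c by simp
    show ?thesis using psi_comp_above[OF cj k(1) j(2)] cj c k j by (simp add: closed psi)
  qed
qed

lemma folds_deg1_comp:
  assumes "1 \<le> k" "k \<le> r"
  shows "r \<le> Suc m \<Longrightarrow> composable G (Suc m) j x y \<Longrightarrow> folds_deg1 m r k x \<Longrightarrow> folds_deg1 m r k y \<Longrightarrow>
    folds_deg1 m r k (cp G (Suc m) j x y)"
  using assms
proof (induction r k arbitrary: j x y rule: stage_induct)
  case base
  then obtain z1 z2 where "z1 \<in> cell G m" "x = dg G m 1 z1" "z2 \<in> cell G m" "y = dg G m 1 z2"
    by (auto simp: folds_deg1_def Phi_from_def)
  then show ?case using comp_deg1[of z1 m z2 j] base by (simp add: folds_deg1_def Phi_from_def)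
next
  case (block r)
  then show ?case by (simp add: folds_deg1_block)
next
  case (step r k)
  obtain m' where m: "m = Suc m'" using step by (cases m) auto
  have "psi G (Suc m) k (cp G (Suc m) j x y) \<in> {z. folds_deg1 m r (Suc k) z}"
    unfolding m
  proof (rule psi_comp_in_closure)
    fix w assume "w \<in> cell G (Suc m')"
    then show "dg G (Suc m') k w \<in> {z. folds_deg1 (Suc m') r (Suc k) z}"
      using folds_deg1_deg[of "Suc k" r "Suc m'" w k] step m by simp
  qed (use step m folds_deg1_step[of k r m] in auto)
  then show ?case using folds_deg1_step[of k r m] step by simp
qed

lemma psi_upto_conn_above: "u \<in> cell G (Suc m) \<Longrightarrow> 1 \<le> j \<Longrightarrow> j \<le> Suc m \<Longrightarrow> Suc l < j \<Longrightarrow>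
  psi_upto G (Suc (Suc m)) l (cn G (Suc m) j \<alpha> u) = cn G (Suc m) j \<alpha> (psi_upto G (Suc m) l u)"
proof (induction l)
  case (Suc l)
  have c: "psi_upto G (Suc m) l u \<in> cell G (Suc m)" using psi_upto_closed[of u "Suc m" l] Suc by simp
  show ?case using Suc psi_conn_above[OF c, of "Suc l" j \<alpha>] by simp
qed simp

text \<open>Gamma_j passes unchanged through psi_1, ..., psi_(j-2); the pair psi_j, psi_(j-1) turns
  it into Gamma_(j-1) with the opposite sign, which then commutes with the remaining psi's.\<close>

lemma psi_upto_conn_fold:
  assumes u: "u \<in> cell G (Suc (Suc k))" and j: "2 \<le> j" "j \<le> l" and l: "l \<le> Suc (Suc k)"
  shows "psi_upto G (Suc (Suc (Suc k))) l (cn G (Suc (Suc k)) j \<alpha> u) =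
    cn G (Suc (Suc k)) (j - 1) (opp \<alpha>) (psi_upto G (Suc (Suc k)) (l - 1) u)"
  using j(2) l
proof (induction l rule: dec_induct)
  case base
  obtain i where i: "j = Suc (Suc i)" using j(1) by (cases j; cases "j - 1") auto
  have w: "psi_upto G (Suc (Suc k)) i u \<in> cell G (Suc (Suc k))"
    using psi_upto_closed[of u "Suc (Suc k)" i] u base i by simp
  have "psi_upto G (Suc (Suc (Suc k))) i (cn G (Suc (Suc k)) j \<alpha> u) =
      cn G (Suc (Suc k)) j \<alpha> (psi_upto G (Suc (Suc k)) i u)"
    using psi_upto_conn_above[of u "Suc k" j i \<alpha>] u base i by simp
  then show ?case using psi_Suc_psi_conn[OF w, of "Suc i" \<alpha>] base i by simp
next
  case (step l)
  have c: "psi_upto G (Suc (Suc k)) (l - 1) u \<in> cell G (Suc (Suc k))"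
    using psi_upto_closed[of u "Suc (Suc k)" "l - 1"] u step by simp
  have "psi_upto G (Suc (Suc k)) l u = psi G (Suc (Suc k)) l (psi_upto G (Suc (Suc k)) (l - 1) u)"
    using step j by (cases l) auto
  then show ?case using step psi_conn_below[OF c, of "j - 1" l "opp \<alpha>"] j by simp
qed

lemma psi_upto_deg1: "v \<in> cell G (Suc m) \<Longrightarrow> l \<le> Suc m \<Longrightarrow>
  psi_upto G (Suc (Suc m)) l (dg G (Suc m) 1 v) = dg G (Suc m) 1 (psi_upto G (Suc m) (l - 1) v)"
proof (induction l)
  case 0 then show ?case by simp
next
  case (Suc l)
  show ?case
  proof (cases l)
    case 0 then show ?thesis using Suc psi_deg_same[of v m 1] by simp
  next
    case (Suc l')
    have c: "psi_upto G (Suc m) l' v \<in> cell G (Suc m)" using psi_upto_closed[of v "Suc m" l'] Suc.prems Suc by simp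
    show ?thesis using Suc.IH Suc.prems Suc psi_deg_below[OF c, of 1 l] by simp
  qed
qed

lemma psi_upto_conn1:
  assumes u: "u \<in> cell G (Suc m)" and l: "1 \<le> l" "l \<le> Suc m"
  shows "psi_upto G (Suc (Suc m)) l (cn G (Suc m) 1 \<alpha> u) = dg G (Suc m) 1 (psi_upto G (Suc m) (l - 1) u)"
  using l
proof (induction l rule: dec_induct)
  case base
  then show ?case using psi_conn_same[of u m 1 \<alpha>] u by simp
next
  case (step l)
  have c: "psi_upto G (Suc m) (l - 1) u \<in> cell G (Suc m)"
    using psi_upto_closed[of u "Suc m" "l - 1"] u step by simp
  have "psi_upto G (Suc m) l u = psi G (Suc m) l (psi_upto G (Suc m) (l - 1) u)"
    using step by (cases l) auto
  then show ?case using step psi_deg_below[OF c, of 1 l] by simp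
qed

lemma Phi_upto_deg1: "v \<in> cell G (Suc m) \<Longrightarrow> r \<le> Suc (Suc m) \<Longrightarrow>
  Phi_upto G (Suc (Suc m)) r (dg G (Suc m) 1 v) = dg G (Suc m) 1 (Phi_upto G (Suc m) (r - 1) v)"
proof (induction r arbitrary: v)
  case 0 then show ?case by simp
next
  case (Suc r)
  have closed: "psi_upto G (Suc m) (r - 1) v \<in> cell G (Suc m)" using psi_upto_closed[of v "Suc m" "r - 1"] Suc by simp
  have deg_step: "Phi_upto G (Suc (Suc m)) (Suc r) (dg G (Suc m) 1 v) = Phi_upto G (Suc (Suc m)) r (dg G (Suc m) 1 (psi_upto G (Suc m) (r - 1) v))"
    using psi_upto_deg1[of v m r] Suc by (simp add: Psi_def)
  have Phi_upto_step: "Phi_upto G (Suc m) r v = Phi_upto G (Suc m) (r - 1) (psi_upto G (Suc m) (r - 1) v)" if "1 \<le> r"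
    using that by (cases r) (auto simp: Psi_def)
  show ?case
  proof (cases r)
    case 0 then show ?thesis using Suc by (simp add: Psi_def)
  next
    case (Suc r') then show ?thesis using deg_step Phi_upto_step Suc.IH[OF closed] \<open>Suc r \<le> Suc (Suc m)\<close> by simp
  qed
qed

lemma Phi_upto_conn: "u \<in> cell G (Suc m) \<Longrightarrow> 1 \<le> j \<Longrightarrow> j < r \<Longrightarrow> r \<le> Suc (Suc m) \<Longrightarrow>
  Phi_upto G (Suc (Suc m)) r (cn G (Suc m) j \<alpha> u) = dg G (Suc m) 1 (Phi_upto G (Suc m) (r - 1) u)"
proof (induction r arbitrary: u j \<alpha>)
  case 0 then show ?case by simp
next
  case (Suc r)
  have closed: "psi_upto G (Suc m) (r - 1) u \<in> cell G (Suc m)" using psi_upto_closed[of u "Suc m" "r - 1"] Suc by simp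
  have Phi_upto_step: "Phi_upto G (Suc m) r u = Phi_upto G (Suc m) (r - 1) (psi_upto G (Suc m) (r - 1) u)"
    using Suc by (cases r) (auto simp: Psi_def)
  show ?case
  proof (cases "j = 1")
    case True
    have "Phi_upto G (Suc (Suc m)) (Suc r) (cn G (Suc m) j \<alpha> u) = Phi_upto G (Suc (Suc m)) r (dg G (Suc m) 1 (psi_upto G (Suc m) (r - 1) u))"
      using psi_upto_conn1[of u m r \<alpha>] Suc True by (simp add: Psi_def)
    then show ?thesis using Phi_upto_deg1[OF closed, of r] Phi_upto_step Suc by simp
  next
    case False
    obtain k where k: "m = Suc k" using Suc False by (cases m) auto
    have "Phi_upto G (Suc (Suc m)) (Suc r) (cn G (Suc m) j \<alpha> u) = Phi_upto G (Suc (Suc m)) r (cn G (Suc m) (j - 1) (opp \<alpha>) (psi_upto G (Suc m) (r - 1) u))"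
      using psi_upto_conn_fold[of u k j r \<alpha>] Suc False k by (simp add: Psi_def)
    also have "... = dg G (Suc m) 1 (Phi_upto G (Suc m) (r - 1) (psi_upto G (Suc m) (r - 1) u))"
      using Suc.IH[of "psi_upto G (Suc m) (r - 1) u" "j - 1" "opp \<alpha>"] closed Suc False by simp
    finally show ?thesis using Phi_upto_step by simp
  qed
qed

lemma composite_folds_deg1:
  "x \<in> deg_conn_composites G n \<Longrightarrow> \<exists>m. n = Suc m \<and> folds_deg1 m n 1 x"
proof (induction rule: deg_conn_composites.induct)
  case (deg y i)
  obtain m where m: "n = Suc m" using deg by (cases n) auto
  have "i < n \<or> 1 < n \<or> i = 1" using deg m by (cases m) auto
  then have "folds_deg1 m n 1 (dg G m i y)"
    using folds_deg1_deg[of 1 n m y i] deg m by simp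
  then show ?case using m by simp
next
  case (conn z j \<alpha>)
  obtain m where m: "n = Suc m" using conn by (cases n) auto
  obtain k where k: "m = Suc k" using conn m by (cases m) auto
  have z: "z \<in> cell G (Suc k)" using conn m k by simp
  have "Phi_from G (Suc m) n 1 (cn G m j \<alpha> z) = dg G m 1 (Phi_upto G m (n - 1) z)"
    using Phi_eq_Phi_from[of "Suc m" G] Phi_upto_conn[OF z, of j n \<alpha>] conn m k unfolding Phi_def by simp
  moreover have "Phi_upto G m (n - 1) z \<in> cell G m" using Phi_upto_closed[of z m "n - 1"] z k m by simp
  ultimately have "folds_deg1 m n 1 (cn G m j \<alpha> z)" unfolding folds_deg1_def by blast
  then show ?case using m by simp
next
  case (comp a b k)
  then obtain m where "n = Suc m" "folds_deg1 m n 1 a" "folds_deg1 m n 1 b" by auto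
  then show ?case using folds_deg1_comp[of 1 n m k a b] comp by auto
qed

lemma thin_if_composite: "x \<in> cell G n \<Longrightarrow> x \<in> deg_conn_composites G n \<Longrightarrow> thin G n x"
  using composite_folds_deg1[of x n] thin_iff_Phi_deg1[of x n] Phi_eq_Phi_from[of n G x]
  by (auto simp: folds_deg1_def)

end

theorem theorem9p3:
  fixes G :: "'a cubcat" and n :: nat and x :: 'a
  assumes "cubical_omega_cat_conn G"
    and "x \<in> cell G n"
  shows "thin G n x \<longleftrightarrow> x \<in> deg_conn_composites G n"
  using cubical_omega_cat_conn.composite_if_thin[OF assms] cubical_omega_cat_conn.thin_if_composite[OF assms]
  by blast

end
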